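(* Let $m$ be an odd positive integer, $D=D_{2m}$, $\sigma=\sigma_{2m}$, $\tau=\tau_{2m}$. Let $I_m\subset\mathbb{Z}[D/\langle\sigma^m\rangle]\oplus\mathbb{Z}[D/\langle\tau\rangle]$ be the kernel of the sum of the two augmentation maps, let $R_m:=\mathbb{Z}[D]\oplus\mathbb{Z}[D/\langle\sigma^m\rangle]\oplus\mathbb{Z}$ ($\mathbb{Z}$ with trivial action), and let $\Psi_m\colon R_m\to I_m$ be the $D$-homomorphism $\Psi_m(x_1,x_2,x_3)=\psi_1(x_1)+\psi_2(x_2)+\psi_3(x_3)$, where $\psi_1,\psi_2,\psi_3$ are the $D$-homomorphisms determined by $\psi_1(1)=(1,-1)$, $\psi_2(1)=(1+\sigma^2,\,-(1+\sigma^m))$, $\psi_3(1)=\big((\textstyle\sum_{i=0}^{m-1}\sigma^i)(1+\tau),\,-\sum_{i=0}^{2m-1}\sigma^i\big)$. Then $\Psi_m$ is surjective, and with $E_m:=\ker\Psi_m$ the exact sequence $0\to E_m\to R_m\xrightarrow{\Psi_m}I_m\to0$ is a coflabby resolution of $I_m$; that is, $H^1(H,E_m)=0$ for every subgroup $H$ of $D$.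
   Context: $D_{n}:=\langle\sigma_n,\tau_n\mid\sigma_n^n=\tau_n^2=1,\ \tau_n\sigma_n\tau_n^{-1}=\sigma_n^{-1}\rangle$ is the dihedral group of order $2n$. In $\mathbb{Z}[D/H]$, an element $g\in D$ (or a $\mathbb{Z}$-combination of such) denotes its image under $g\mapsto gH$; so $1$ denotes the trivial coset. The augmentation $\mathbb{Z}[D/H]\to\mathbb{Z}$ sends each coset to $1$. A coflabby resolution of a $G$-lattice $M$ is an exact sequence $0\to F\to R\to M\to0$ of $G$-lattices with $R$ permutation (has a $\mathbb{Z}$-basis permuted by $G$) and $H^1(H,F)=0$ for all subgroups $H\leq G$. *)

theory Defs
  imports "HOL-Algebra.Coset" "HOL-Library.Function_Algebras" "HOL-Library.Product_Plus"
begin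

text \<open>Dihedral group of order 2n: the pair (k, e) stands for sigma^k tau^e, 0 <= k < n.\<close>

definition dmul :: "int \<Rightarrow> int \<times> bool \<Rightarrow> int \<times> bool \<Rightarrow> int \<times> bool" where
  "dmul n x y = ((fst x + (if snd x then - fst y else fst y)) mod n, snd x \<noteq> snd y)"

definition dihedral :: "int \<Rightarrow> (int \<times> bool) monoid" where
  "dihedral n = \<lparr>carrier = {0..<n} \<times> UNIV, mult = dmul n, one = (0, False)\<rparr>"

definition dsigma :: "int \<times> bool" where "dsigma = (1, False)"
definition dtau :: "int \<times> bool" where "dtau = (0, True)"

definition lcos :: "('a, 'b) monoid_scheme \<Rightarrow> 'a set \<Rightarrow> 'a set set" where
  "lcos G H = {g <#\<^bsub>G\<^esub> H | g. g \<in> carrier G}"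

text \<open>The permutation lattice Z[G/H], as integer-valued functions on G/H
  (zero outside G/H); the coset gH corresponds to its indicator.\<close>
definition pm :: "('a, 'b) monoid_scheme \<Rightarrow> 'a set \<Rightarrow> ('a set \<Rightarrow> int) set" where
  "pm G H = {x. \<forall>C. C \<notin> lcos G H \<longrightarrow> x C = 0}"

definition pact :: "('a, 'b) monoid_scheme \<Rightarrow> 'a set \<Rightarrow> 'a \<Rightarrow> ('a set \<Rightarrow> int) \<Rightarrow> ('a set \<Rightarrow> int)" where
  "pact G H g x = (\<lambda>C. if C \<in> lcos G H then x (inv\<^bsub>G\<^esub> g <#\<^bsub>G\<^esub> C) else 0)"

definition cs :: "('a, 'b) monoid_scheme \<Rightarrow> 'a set \<Rightarrow> 'a \<Rightarrow> ('a set \<Rightarrow> int)" where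
  "cs G H g = (\<lambda>C. if C = g <#\<^bsub>G\<^esub> H then 1 else 0)"

definition aug :: "('a, 'b) monoid_scheme \<Rightarrow> 'a set \<Rightarrow> ('a set \<Rightarrow> int) \<Rightarrow> int" where
  "aug G H x = (\<Sum>C\<in>lcos G H. x C)"

definition zsc :: "int \<Rightarrow> ('a \<Rightarrow> int) \<Rightarrow> ('a \<Rightarrow> int)" where
  "zsc k y = (\<lambda>C. k * y C)"

definition zsc2 :: "int \<Rightarrow> ('a \<Rightarrow> int) \<times> ('b \<Rightarrow> int) \<Rightarrow> ('a \<Rightarrow> int) \<times> ('b \<Rightarrow> int)" where
  "zsc2 k y = (zsc k (fst y), zsc k (snd y))"

definition crep :: "'a set \<Rightarrow> 'a" where "crep C = (SOME g. g \<in> C)"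

text \<open>The G-homomorphism Z[G/H] -> M determined by 1 |-> v (for v fixed by H),
  given the action act on a target M = Z[G/A] + Z[G/B] (pairs of functions):
  x |-> sum over cosets C = gH of x(C) * g v.\<close>
definition plift :: "('a, 'b) monoid_scheme \<Rightarrow> 'a set
    \<Rightarrow> ('a \<Rightarrow> ('c \<Rightarrow> int) \<times> ('d \<Rightarrow> int) \<Rightarrow> ('c \<Rightarrow> int) \<times> ('d \<Rightarrow> int))
    \<Rightarrow> ('c \<Rightarrow> int) \<times> ('d \<Rightarrow> int) \<Rightarrow> ('a set \<Rightarrow> int) \<Rightarrow> ('c \<Rightarrow> int) \<times> ('d \<Rightarrow> int)" where
  "plift G H act v x = (\<Sum>C\<in>lcos G H. zsc2 (x C) (act (crep C) v))"

definition H1_zero :: "('a, 'b) monoid_scheme \<Rightarrow> 'a set \<Rightarrow> ('a \<Rightarrow> 'm \<Rightarrow> 'm) \<Rightarrow> ('m::ab_group_add) set \<Rightarrow> bool" where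
  "H1_zero G H act E =
    (\<forall>f. (\<forall>h\<in>H. f h \<in> E) \<longrightarrow> (\<forall>g\<in>H. \<forall>h\<in>H. f (g \<otimes>\<^bsub>G\<^esub> h) = f g + act g (f h))
       \<longrightarrow> (\<exists>e\<in>E. \<forall>g\<in>H. f g = act g e - e))"

end

(*
  Surjectivity: the image of Psi is a sublattice of I.  It contains (gS, -gT) for every g
  (from psi_1), hence with psi_2 also the differences gT - g sigma^m T and g sigma^2 T - gT.
  As m is odd, sigma^2 and sigma^m generate the rotations, so all differences gT - T lie in
  the image, and together with the (gS, -gT) these span I.

  Coflabbiness: H^1 of a finite group with values in a permutation lattice vanishes, and E is
  a permutation lattice: with K1 = <sigma^m tau> and K2 = <sigma>, the D-map
  Z[D/K1] + Z[D/K2] -> E sending the trivial cosets to explicit kernel elements e1 and e2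
  (fixed by K1 and K2) is an isomorphism, whose inverse is read off from a few coordinates
  of R.  Its surjectivity rests on the fact that an element of E vanishing on these
  coordinates is zero, which is again a parity argument using that m is odd.
*)

theory Submission
  imports Defs HOL.Modules
begin

section \<open>Permutation lattices\<close>

lemma sum_fun_apply: "(\<Sum>x\<in>A. f x) C = (\<Sum>x\<in>A. f x C)"
  by (induction A rule: infinite_finite_induct) auto

lemma zsc_apply [simp]: "zsc k y C = k * y C"
  by (simp add: zsc_def)

lemma zsc2_Pair: "zsc2 a (x, y) = (zsc a x, zsc a y)"
  by (simp add: zsc2_def)

definition zsc3 :: "int \<Rightarrow> ('a \<Rightarrow> int) \<times> ('b \<Rightarrow> int) \<times> int \<Rightarrow> ('a \<Rightarrow> int) \<times> ('b \<Rightarrow> int) \<times> int" where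
  "zsc3 k x = (zsc k (fst x), zsc k (fst (snd x)), k * snd (snd x))"

interpretation zsc: module zsc
  by unfold_locales (auto simp: zsc_def fun_eq_iff algebra_simps)

interpretation zsc2: module zsc2
  by unfold_locales (auto simp: zsc2_def algebra_simps)

interpretation zsc3: module zsc3
  by unfold_locales (auto simp: zsc3_def algebra_simps)

interpretation pact: module_hom zsc zsc "pact G K g" for G K g
  by unfold_locales (auto simp: pact_def fun_eq_iff)

interpretation aug: additive "aug G K" for G K
  by unfold_locales (simp add: aug_def sum.distrib)

lemma aug_zsc: "aug G K (zsc a x) = a * aug G K x"
  by (simp add: aug_def sum_distrib_left)

lemma subspace_pm: "zsc.subspace (pm G K)"
  by (simp add: zsc.subspace_def pm_def)

lemmas pm_zero [simp] = zsc.subspace_0[OF subspace_pm]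
  and pm_add = zsc.subspace_add[OF subspace_pm]
  and pm_uminus = zsc.subspace_neg[OF subspace_pm]
  and pm_diff = zsc.subspace_diff[OF subspace_pm]
  and pm_zsc = zsc.subspace_scale[OF subspace_pm]
  and pm_sum = zsc.subspace_sum[OF subspace_pm]

lemma pact_in_pm: "pact G K g x \<in> pm G K"
  by (simp add: pm_def pact_def)

context group
begin

lemma lcosI: "g \<in> carrier G \<Longrightarrow> g <# K \<in> lcos G K"
  by (auto simp: lcos_def)

lemma lcosE: "C \<in> lcos G K \<Longrightarrow> (\<And>g. g \<in> carrier G \<Longrightarrow> C = g <# K \<Longrightarrow> P) \<Longrightarrow> P"
  by (auto simp: lcos_def)

lemma lcos_eq_image: "lcos G K = (\<lambda>g. g <# K) ` carrier G"
  by (auto simp: lcos_def)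

lemma finite_lcos: "finite (carrier G) \<Longrightarrow> finite (lcos G K)"
  by (simp add: lcos_eq_image)

lemma pm_cs: "g \<in> carrier G \<Longrightarrow> cs G K g \<in> pm G K"
  by (auto simp: pm_def cs_def lcosI)

lemma aug_cs: "finite (carrier G) \<Longrightarrow> g \<in> carrier G \<Longrightarrow> aug G K (cs G K g) = 1"
  by (simp add: aug_def cs_def finite_lcos lcosI)

context
  fixes K assumes K: "subgroup K G"
begin

lemma lcos_self_mem: "g \<in> carrier G \<Longrightarrow> g \<in> g <# K"
  unfolding l_coset_def using subgroup.one_closed[OF K] by force

lemma lcos_subset_carrier: "C \<in> lcos G K \<Longrightarrow> C \<subseteq> carrier G"
  using l_coset_carrier K by (auto elim!: lcosE)

lemma lcos_eq_mem: assumes "C \<in> lcos G K" "h \<in> C" shows "h <# K = C"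
  using assms l_repr_independence[OF _ _ K] by (auto elim!: lcosE)

lemma lcos_eq_iff_mem: "C \<in> lcos G K \<Longrightarrow> h \<in> carrier G \<Longrightarrow> h <# K = C \<longleftrightarrow> h \<in> C"
  using lcos_eq_mem lcos_self_mem by blast

lemma lcos_eq_iff: "g \<in> carrier G \<Longrightarrow> h \<in> carrier G \<Longrightarrow> g <# K = h <# K \<longleftrightarrow> h \<in> g <# K"
  using lcos_eq_iff_mem[OF lcosI] by metis

lemma crep_mem: assumes "C \<in> lcos G K" shows "crep C \<in> C"
proof -
  obtain g where "g \<in> carrier G" "C = g <# K" using assms by (rule lcosE)
  then have "g \<in> C" using lcos_self_mem by simp
  then show ?thesis unfolding crep_def by (rule someI)
qed

lemma crep_carrier: "C \<in> lcos G K \<Longrightarrow> crep C \<in> carrier G"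
  using crep_mem lcos_subset_carrier by blast

lemma crep_lcos: "C \<in> lcos G K \<Longrightarrow> crep C <# K = C"
  using crep_mem lcos_eq_mem by blast

lemma lcos_lmult: "g \<in> carrier G \<Longrightarrow> h \<in> carrier G \<Longrightarrow> g <# (h <# K) = (g \<otimes> h) <# K"
  using lcos_m_assoc subgroup.subset[OF K] by blast

lemma lcos_lmult_closed: "g \<in> carrier G \<Longrightarrow> C \<in> lcos G K \<Longrightarrow> g <# C \<in> lcos G K"
  by (auto simp: lcos_lmult lcosI elim!: lcosE)

lemma lcos_lmult_assoc:
  "g \<in> carrier G \<Longrightarrow> h \<in> carrier G \<Longrightarrow> C \<in> lcos G K \<Longrightarrow> g <# (h <# C) = (g \<otimes> h) <# C"
  using lcos_m_assoc lcos_subset_carrier by blast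

lemma lcos_lmult_inv_cancel:
  assumes "g \<in> carrier G" "C \<in> lcos G K"
  shows "inv g <# (g <# C) = C" "g <# (inv g <# C) = C"
  using assms lcos_lmult_assoc lcos_mult_one lcos_subset_carrier by auto

lemma bij_betw_lcos_lmult: "g \<in> carrier G \<Longrightarrow> bij_betw (\<lambda>C. g <# C) (lcos G K) (lcos G K)"
  by (rule bij_betw_byWitness[where f' = "\<lambda>C. inv g <# C"])
    (auto simp: lcos_lmult_inv_cancel lcos_lmult_closed)

lemma card_lcos: "g \<in> carrier G \<Longrightarrow> card (g <# K) = card K"
proof -
  assume g: "g \<in> carrier G"
  have "inj_on (\<lambda>k. g \<otimes> k) K"
    using g subgroup.subset[OF K] by (auto intro!: inj_onI simp: subset_iff)
  moreover have "g <# K = (\<lambda>k. g \<otimes> k) ` K" by (auto simp: l_coset_def)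
  ultimately show ?thesis by (simp add: card_image)
qed

lemma sum_carrier_partition:
  assumes "finite (carrier G)"
  shows "(\<Sum>g\<in>carrier G. F g) = (\<Sum>C\<in>lcos G K. \<Sum>g\<in>C. F g)"
proof -
  have "(\<Sum>g\<in>carrier G. F g) = (\<Sum>C\<in>lcos G K. \<Sum>g\<in>{g\<in>carrier G. g <# K = C}. F g)"
    by (rule sum.group[symmetric]) (auto simp: assms finite_lcos lcosI)
  also have "\<dots> = (\<Sum>C\<in>lcos G K. \<Sum>g\<in>C. F g)"
    using lcos_eq_iff_mem lcos_subset_carrier by (intro sum.cong refl arg_cong2[where f = sum]) auto
  finally show ?thesis .
qed

lemma sum_carrier_lcos:
  assumes "finite (carrier G)"
  shows "(\<Sum>g\<in>carrier G. F (g <# K)) = of_nat (card K) * (\<Sum>C\<in>lcos G K. F C)"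
proof -
  have "(\<Sum>C\<in>lcos G K. \<Sum>g\<in>C. F (g <# K)) = (\<Sum>C\<in>lcos G K. of_nat (card K) * F C)"
    using card_lcos lcos_eq_mem by (intro sum.cong) (auto elim!: lcosE)
  then show ?thesis by (simp add: sum_carrier_partition[OF assms] sum_distrib_left)
qed

lemma pact_mult:
  assumes "g \<in> carrier G" "h \<in> carrier G"
  shows "pact G K g (pact G K h x) = pact G K (g \<otimes> h) x"
  using assms lcos_lmult_closed lcos_lmult_assoc
  by (auto simp: pact_def fun_eq_iff inv_mult_group)

lemma pact_one: "x \<in> pm G K \<Longrightarrow> pact G K \<one> x = x"
  using lcos_mult_one lcos_subset_carrier by (auto simp: pact_def pm_def fun_eq_iff)

lemma pact_cs:
  assumes "g \<in> carrier G" "h \<in> carrier G"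
  shows "pact G K g (cs G K h) = cs G K (g \<otimes> h)"
proof
  fix C
  have "inv g <# C = h <# K \<longleftrightarrow> C = (g \<otimes> h) <# K" if "C \<in> lcos G K"
    using that assms lcos_lmult_inv_cancel[OF assms(1)] lcos_lmult m_assoc[symmetric]
    by (metis lcosI)
  then show "pact G K g (cs G K h) C = cs G K (g \<otimes> h) C"
    using assms lcosI by (auto simp: pact_def cs_def)
qed

lemma aug_pact:
  assumes "finite (carrier G)" "g \<in> carrier G"
  shows "aug G K (pact G K g x) = aug G K x"
  using sum.reindex_bij_betw[OF bij_betw_lcos_lmult[of "inv g"], of x] assms
  by (simp add: aug_def pact_def)

lemma pm_decomp:
  assumes "finite (carrier G)" "x \<in> pm G K"
  shows "x = (\<Sum>C\<in>lcos G K. zsc (x C) (cs G K (crep C)))"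
proof
  fix C0
  have "(\<Sum>C\<in>lcos G K. zsc (x C) (cs G K (crep C))) C0 = (\<Sum>C\<in>lcos G K. if C = C0 then x C else 0)"
    by (auto simp: sum_fun_apply cs_def crep_lcos intro!: sum.cong)
  with assms show "x C0 = (\<Sum>C\<in>lcos G K. zsc (x C) (cs G K (crep C))) C0"
    by (auto simp: finite_lcos pm_def)
qed

end

lemma sum_lcos_restrict:
  assumes "subgroup K G" "subgroup L G" "finite (carrier G)" "C0 \<in> lcos G L"
  shows "(\<Sum>C\<in>lcos G K. \<Sum>h\<in>C. if h \<in> C0 then F h else 0) = (\<Sum>h\<in>C0. F h)"
proof -
  have "(\<Sum>C\<in>lcos G K. \<Sum>h\<in>C. if h \<in> C0 then F h else 0)
      = (\<Sum>h\<in>carrier G. if h \<in> C0 then F h else 0)"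
    by (rule sum_carrier_partition[OF assms(1,3), symmetric])
  also have "\<dots> = (\<Sum>h\<in>carrier G \<inter> C0. F h)"
    using assms(3) by (simp add: sum.inter_restrict)
  also have "carrier G \<inter> C0 = C0"
    using lcos_subset_carrier[OF assms(2,4)] by blast
  finally show ?thesis .
qed

lemma pm_eq_0I:
  assumes "x \<in> pm G K" "\<And>g. g \<in> carrier G \<Longrightarrow> x (g <# K) = 0"
  shows "x = 0"
proof
  fix C
  show "x C = 0 C"
    using assms by (cases "C \<in> lcos G K") (auto simp: pm_def elim: lcosE)
qed

end

section \<open>Lattices with a group action and their first cohomology\<close>

locale lattice_action = group G + module scale
  for G :: "('a, 'b) monoid_scheme" (structure) and scale :: "int \<Rightarrow> 'm::ab_group_add \<Rightarrow> 'm" +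
  fixes act :: "'a \<Rightarrow> 'm \<Rightarrow> 'm"
  assumes act_hom: "g \<in> carrier G \<Longrightarrow> module_hom scale scale (act g)"
    and act_mult: "g \<in> carrier G \<Longrightarrow> h \<in> carrier G \<Longrightarrow> act (g \<otimes> h) v = act g (act h v)"

definition coset_lift :: "(int \<Rightarrow> 'm \<Rightarrow> 'm) \<Rightarrow> ('a, 'b) monoid_scheme \<Rightarrow> 'a set
    \<Rightarrow> ('a \<Rightarrow> 'm \<Rightarrow> 'm) \<Rightarrow> 'm \<Rightarrow> ('a set \<Rightarrow> int) \<Rightarrow> 'm::comm_monoid_add" where
  "coset_lift scale G K act v x = (\<Sum>C\<in>lcos G K. scale (x C) (act (crep C) v))"

lemma plift_eq_coset_lift: "plift G K act v = coset_lift zsc2 G K act v"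
  by (simp add: plift_def coset_lift_def fun_eq_iff)

context lattice_action
begin

lemma act_add: "g \<in> carrier G \<Longrightarrow> act g (v + w) = act g v + act g w"
  using act_hom module_hom.add by blast

lemma act_scale: "g \<in> carrier G \<Longrightarrow> act g (scale a v) = scale a (act g v)"
  using act_hom module_hom.scale by blast

lemma act_sum: "g \<in> carrier G \<Longrightarrow> act g (\<Sum>i\<in>A. f i) = (\<Sum>i\<in>A. act g (f i))"
  using act_hom module_hom.sum by blast

lemma module_hom_coset_lift: "module_hom zsc scale (coset_lift scale G K act v)"
  by unfold_locales
    (simp_all add: coset_lift_def scale_left_distrib sum.distrib scale_sum_right)

context
  fixes K v
  assumes K: "subgroup K G" and fin: "finite (carrier G)" and v_fixed: "\<forall>k\<in>K. act k v = v"
begin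

lemma coset_lift_cs:
  assumes h: "h \<in> carrier G"
  shows "coset_lift scale G K act v (cs G K h) = act h v"
proof -
  have "coset_lift scale G K act v (cs G K h) = (\<Sum>C\<in>lcos G K. if C = h <# K then act (crep C) v else 0)"
    by (auto simp: coset_lift_def cs_def intro!: sum.cong)
  also have "\<dots> = act (crep (h <# K)) v"
    using fin lcosI[OF h] by (simp add: finite_lcos)
  also obtain k where "k \<in> K" "crep (h <# K) = h \<otimes> k"
    using crep_mem[OF K lcosI[OF h]] by (auto simp: l_coset_def)
  then have "act (crep (h <# K)) v = act h v"
    using h v_fixed subgroup.subset[OF K] act_mult by auto
  finally show ?thesis .
qed

lemma coset_lift_pact:
  assumes g: "g \<in> carrier G" and x: "x \<in> pm G K"
  shows "coset_lift scale G K act v (pact G K g x) = act g (coset_lift scale G K act v x)"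
proof -
  interpret lift: module_hom zsc scale "coset_lift scale G K act v"
    by (rule module_hom_coset_lift)
  have "pact G K g x = (\<Sum>C\<in>lcos G K. zsc (x C) (cs G K (g \<otimes> crep C)))"
    by (subst pm_decomp[OF K fin x])
      (simp add: pact.sum pact.scale pact_cs[OF K g] crep_carrier[OF K])
  then have "coset_lift scale G K act v (pact G K g x)
      = (\<Sum>C\<in>lcos G K. scale (x C) (act (g \<otimes> crep C) v))"
    by (simp add: lift.sum lift.scale coset_lift_cs crep_carrier[OF K] g)
  also have "\<dots> = act g (coset_lift scale G K act v x)"
    by (simp add: coset_lift_def act_sum act_scale act_mult crep_carrier[OF K] g)
  finally show ?thesis .
qed

end

end

text \<open>A crossed homomorphism f into a permutation lattice is the coboundary of t div |H|, where
  t is minus the sum of all f h: the cocycle identity gives |H| f g = t (g\<inverse> C) - t C, so t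
  is constant modulo |H| along orbits and the division commutes with the difference.\<close>

lemma (in group) H1_zero_pm:
  assumes K: "subgroup K G" and fin: "finite (carrier G)" and H: "subgroup H G"
  shows "H1_zero G H (pact G K) (pm G K)"
  unfolding H1_zero_def
proof (intro allI impI)
  fix f assume f_pm: "\<forall>h\<in>H. f h \<in> pm G K"
    and cocycle: "\<forall>g\<in>H. \<forall>h\<in>H. f (g \<otimes> h) = f g + pact G K g (f h)"
  have H_carrier: "h \<in> H \<Longrightarrow> h \<in> carrier G" for h
    using subgroup.subset[OF H] by blast
  define N where "N = int (card H)"
  have "finite H" using fin subgroup.subset[OF H] finite_subset by blast
  then have N: "N > 0"
    using subgroup.one_closed[OF H] by (auto simp: N_def card_gt_0_iff)
  define t where "t C = - (\<Sum>h\<in>H. f h C)" for C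
  define q where "q C = t C div N" for C
  have t_shift: "t (inv g <# C) = t C + N * f g C" if g: "g \<in> H" and C: "C \<in> lcos G K" for g C
  proof -
    have "inj_on (\<lambda>h. g \<otimes> h) H" "(\<lambda>h. g \<otimes> h) ` H = H"
      using g H_carrier coset_join3[OF H_carrier H g] by (auto intro!: inj_onI simp: l_coset_def)
    then have "bij_betw (\<lambda>h. g \<otimes> h) H H" by (simp add: bij_betw_def)
    then have "(\<Sum>h\<in>H. f h C) = (\<Sum>h\<in>H. f (g \<otimes> h) C)"
      by (rule sum.reindex_bij_betw[symmetric])
    also have "\<dots> = (\<Sum>h\<in>H. f g C + f h (inv g <# C))"
      using cocycle g C by (intro sum.cong) (simp_all add: pact_def)
    finally show ?thesis by (simp add: t_def N_def sum.distrib)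
  qed
  have q_pm: "q \<in> pm G K"
    using f_pm by (auto simp: pm_def q_def t_def)
  have "f g = pact G K g q - q" if g: "g \<in> H" for g
  proof
    fix C
    show "f g C = (pact G K g q - q) C"
    proof (cases "C \<in> lcos G K")
      case True
      then have "q (inv g <# C) = f g C + q C"
        using N by (simp add: q_def t_shift[OF g] add.commute mult.commute)
      then show ?thesis using True by (simp add: pact_def)
    qed (use f_pm g q_pm in \<open>simp add: pact_def pm_def\<close>)
  qed
  then show "\<exists>q\<in>pm G K. \<forall>g\<in>H. f g = pact G K g q - q" using q_pm by blast
qed

lemma H1_zero_Times:
  assumes "H1_zero G H act1 A" "H1_zero G H act2 B"
  shows "H1_zero G H (\<lambda>g (a, b). (act1 g a, act2 g b)) (A \<times> B)"
  unfolding H1_zero_def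
proof (intro allI impI)
  fix f assume f: "\<forall>h\<in>H. f h \<in> A \<times> B"
    and cocycle: "\<forall>g\<in>H. \<forall>h\<in>H. f (g \<otimes>\<^bsub>G\<^esub> h) = f g + (case f h of (a, b) \<Rightarrow> (act1 g a, act2 g b))"
  have "\<exists>a\<in>A. \<forall>g\<in>H. fst (f g) = act1 g a - a"
    using spec[OF assms(1)[unfolded H1_zero_def], of "\<lambda>g. fst (f g)"] f cocycle
    by (simp add: mem_Times_iff split: prod.splits)
  moreover have "\<exists>b\<in>B. \<forall>g\<in>H. snd (f g) = act2 g b - b"
    using spec[OF assms(2)[unfolded H1_zero_def], of "\<lambda>g. snd (f g)"] f cocycle
    by (simp add: mem_Times_iff split: prod.splits)
  ultimately show "\<exists>e\<in>A \<times> B. \<forall>g\<in>H. f g = (case e of (a, b) \<Rightarrow> (act1 g a, act2 g b)) - e"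
    by (auto simp: prod_eq_iff)
qed

lemma H1_zero_transfer:
  assumes "H1_zero G H actP P" and "additive \<phi>"
    and P_add: "\<And>p q. p \<in> P \<Longrightarrow> q \<in> P \<Longrightarrow> p + q \<in> P"
    and P_act: "\<And>g p. g \<in> H \<Longrightarrow> p \<in> P \<Longrightarrow> actP g p \<in> P"
    and equivariant: "\<And>g p. g \<in> H \<Longrightarrow> p \<in> P \<Longrightarrow> \<phi> (actP g p) = actE g (\<phi> p)"
    and \<phi>: "\<And>p. p \<in> P \<Longrightarrow> \<phi> p \<in> E \<and> \<psi> (\<phi> p) = p"
    and \<psi>: "\<And>x. x \<in> E \<Longrightarrow> \<psi> x \<in> P \<and> \<phi> (\<psi> x) = x"
  shows "H1_zero G H actE E"
  unfolding H1_zero_def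
proof (intro allI impI)
  interpret \<phi>: additive \<phi> by fact
  fix f assume f: "\<forall>h\<in>H. f h \<in> E"
    and cocycle: "\<forall>g\<in>H. \<forall>h\<in>H. f (g \<otimes>\<^bsub>G\<^esub> h) = f g + actE g (f h)"
  have "\<forall>g\<in>H. \<forall>h\<in>H. \<psi> (f (g \<otimes>\<^bsub>G\<^esub> h)) = \<psi> (f g) + actP g (\<psi> (f h))"
  proof (intro ballI)
    fix g h assume g: "g \<in> H" and h: "h \<in> H"
    have "f (g \<otimes>\<^bsub>G\<^esub> h) = \<phi> (\<psi> (f g) + actP g (\<psi> (f h)))"
      using cocycle f g h \<psi> by (simp add: \<phi>.add equivariant)
    then show "\<psi> (f (g \<otimes>\<^bsub>G\<^esub> h)) = \<psi> (f g) + actP g (\<psi> (f h))"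
      using f g h \<phi> \<psi> P_add P_act by simp
  qed
  then obtain p where p: "p \<in> P" and p_cobound: "\<forall>g\<in>H. \<psi> (f g) = actP g p - p"
    using spec[OF assms(1)[unfolded H1_zero_def], of "\<lambda>g. \<psi> (f g)"] f \<psi> by auto
  show "\<exists>e\<in>E. \<forall>g\<in>H. f g = actE g e - e"
  proof (intro bexI ballI)
    fix g assume g: "g \<in> H"
    have "f g = \<phi> (\<psi> (f g))" using f g \<psi> by simp
    also have "\<dots> = actE g (\<phi> p) - \<phi> p"
      using g p p_cobound by (simp add: \<phi>.diff equivariant)
    finally show "f g = actE g (\<phi> p) - \<phi> p" .
  qed (use p \<phi> in simp)
qed

lemma dvd_iff_double_dvd:
  fixes m x :: int
  shows "m dvd x \<longleftrightarrow> 2 * m dvd x \<or> 2 * m dvd x - m"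
proof
  assume "m dvd x"
  then obtain t where x: "x = m * t" by (auto simp: dvd_def)
  show "2 * m dvd x \<or> 2 * m dvd x - m"
  proof (cases "even t")
    case True
    then show ?thesis using x by auto
  next
    case False
    then obtain s where "t = 2 * s + 1" using oddE by blast
    then have "x - m = 2 * m * s" using x by (simp add: algebra_simps)
    then show ?thesis by simp
  qed
next
  assume "2 * m dvd x \<or> 2 * m dvd x - m"
  then have "m dvd x \<or> m dvd x - m"
    using dvd_mult_right by blast
  moreover have "x = (x - m) + m" by simp
  ultimately show "m dvd x"
    by (metis dvd_add dvd_refl)
qed

lemma not_double_dvd_both:
  fixes m x :: int
  assumes "m \<noteq> 0"
  shows "\<not> (2 * m dvd x \<and> 2 * m dvd x - m)"
proof
  assume "2 * m dvd x \<and> 2 * m dvd x - m"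
  then have "2 * m dvd x - (x - m)" by (blast intro: dvd_diff)
  then have "\<bar>2 * m\<bar> \<le> \<bar>m\<bar>" using assms by (simp add: dvd_imp_le_int)
  then show False using assms by (simp add: abs_mult)
qed

lemma sum_dvd_diff_indicator:
  assumes "0 < k"
  shows "(\<Sum>i<k. if int k dvd j - int i then 1 else 0) = (1::int)"
proof -
  have "int k dvd j - int i \<longleftrightarrow> i = nat (j mod int k)" if "i < k" for i
    using that assms by (auto simp: mod_eq_dvd_iff[symmetric])
  then have "(\<Sum>i<k. if int k dvd j - int i then 1 else (0::int)) = (\<Sum>i<k. if i = nat (j mod int k) then 1 else 0)"
    by (intro sum.cong) auto
  also have "\<dots> = 1"
    using assms by (simp add: nat_less_iff)
  finally show ?thesis .
qed

lemma sum_pairs: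
  fixes f :: "nat \<Rightarrow> 'a::comm_monoid_add"
  shows "(\<Sum>l<k. f (2 * l) + f (2 * l + 1)) = (\<Sum>i<2 * k. f i)"
  by (induction k) (simp_all add: algebra_simps)

lemma neg_shift_iterate:
  fixes h :: "int \<Rightarrow> 'a::ring_1"
  assumes "\<And>a. h a = - h (a - d)"
  shows "h a = (-1) ^ l * h (a - int l * d)"
proof (induction l arbitrary: a)
  case (Suc l)
  have "h (a - int l * d) = - h (a - int (Suc l) * d)"
    using assms[of "a - int l * d"] by (simp add: algebra_simps)
  then show ?case using Suc[of a] by simp
qed simp

section \<open>The dihedral group\<close>

locale dihedral_group =
  fixes n :: int
  assumes n_pos: "0 < n"
begin

abbreviation D where "D \<equiv> dihedral n"

definition rot :: "int \<Rightarrow> int \<times> bool" where "rot i = (i mod n, False)"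
definition rfl :: "int \<Rightarrow> int \<times> bool" where "rfl i = (i mod n, True)"

lemma carrier_D: "carrier D = {0..<n} \<times> UNIV"
  by (simp add: dihedral_def)

lemma rot_carrier [simp]: "rot i \<in> carrier D"
  using n_pos by (simp add: rot_def carrier_D)

lemma rfl_carrier [simp]: "rfl i \<in> carrier D"
  using n_pos by (simp add: rfl_def carrier_D)

lemma carrier_cases:
  assumes "x \<in> carrier D"
  obtains j where "x = rot j" "0 \<le> j" "j < n" | j where "x = rfl j" "0 \<le> j" "j < n"
proof -
  obtain j e where x: "x = (j, e)" "0 \<le> j" "j < n"
    using assms by (cases x) (auto simp: carrier_D)
  then show ?thesis using that by (cases e) (auto simp: rot_def rfl_def)
qed

lemma one_rot: "\<one>\<^bsub>D\<^esub> = rot 0"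
  by (simp add: dihedral_def rot_def)

lemma rot_rot [simp]: "rot i \<otimes>\<^bsub>D\<^esub> rot j = rot (i + j)"
  and rot_rfl [simp]: "rot i \<otimes>\<^bsub>D\<^esub> rfl j = rfl (i + j)"
  and rfl_rot [simp]: "rfl i \<otimes>\<^bsub>D\<^esub> rot j = rfl (i - j)"
  and rfl_rfl [simp]: "rfl i \<otimes>\<^bsub>D\<^esub> rfl j = rot (i - j)"
  by (simp_all add: dihedral_def dmul_def rot_def rfl_def mod_add_eq mod_diff_eq)

lemma rot_eq_iff: "rot i = rot j \<longleftrightarrow> n dvd i - j"
  and rfl_eq_iff: "rfl i = rfl j \<longleftrightarrow> n dvd i - j"
  by (simp_all add: rot_def rfl_def mod_eq_dvd_iff)

lemma rot_neq_rfl [simp]: "rot i \<noteq> rfl j" "rfl j \<noteq> rot i"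
  and snd_rot [simp]: "snd (rot i) = False"
  and snd_rfl [simp]: "snd (rfl i) = True"
  by (simp_all add: rot_def rfl_def)

lemma group_D: "group D"
proof (rule groupI)
  fix x y z assume "x \<in> carrier D" "y \<in> carrier D" "z \<in> carrier D"
  then show "x \<otimes>\<^bsub>D\<^esub> y \<otimes>\<^bsub>D\<^esub> z = x \<otimes>\<^bsub>D\<^esub> (y \<otimes>\<^bsub>D\<^esub> z)"
    by (elim carrier_cases) (auto simp: algebra_simps diff_diff_eq2)
next
  fix x assume "x \<in> carrier D"
  then show "\<exists>y\<in>carrier D. y \<otimes>\<^bsub>D\<^esub> x = \<one>\<^bsub>D\<^esub>"
  proof (elim carrier_cases)
    fix j assume "x = rot j"
    then show ?thesis by (intro bexI[of _ "rot (- j)"]) (simp_all add: one_rot)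
  next
    fix j assume "x = rfl j"
    then show ?thesis by (intro bexI[of _ "rfl j"]) (simp_all add: one_rot)
  qed
qed (auto simp: one_rot elim!: carrier_cases)

sublocale D: group D
  by (rule group_D)

lemma finite_D: "finite (carrier D)"
  by (simp add: carrier_D)

lemma inv_rot [simp]: "inv\<^bsub>D\<^esub> (rot i) = rot (- i)"
  and inv_rfl [simp]: "inv\<^bsub>D\<^esub> (rfl i) = rfl i"
  by (auto intro!: D.inv_equality simp: one_rot)

lemma r_one_rot [simp]: "g \<in> carrier D \<Longrightarrow> g \<otimes>\<^bsub>D\<^esub> rot 0 = g"
  using D.r_one by (simp add: one_rot)

lemma snd_mult: "g \<in> carrier D \<Longrightarrow> h \<in> carrier D \<Longrightarrow> snd (g \<otimes>\<^bsub>D\<^esub> h) = (snd g \<noteq> snd h)"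
  by (elim carrier_cases) auto

lemma snd_inv: "g \<in> carrier D \<Longrightarrow> snd (inv\<^bsub>D\<^esub> g) = snd g"
  by (elim carrier_cases) auto

lemma dtau_rfl: "dtau = rfl 0"
  by (simp add: dtau_def rfl_def)

end

locale odd_dihedral =
  fixes m :: nat
  assumes odd_m: "odd m" and m_pos: "0 < m"
begin

text \<open>n is a constant rather than an abbreviation for 2 * int m, so that the simplifier cannot
  rewrite the parameter of rot and rfl and thereby detach them from their lemmas.\<close>

definition n :: int where "n = 2 * int m"

sublocale dihedral_group n
  using m_pos by unfold_locales (simp add: n_def)

lemma n_gt_1: "1 < n"
  using m_pos by (simp add: n_def)

lemma dsigma_rot: "dsigma = rot 1"
  using n_gt_1 by (simp add: dsigma_def rot_def)

lemma dsigma_pow [simp]: "dsigma [^]\<^bsub>D\<^esub> (a::nat) = rot (int a)"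
  by (induction a) (simp_all add: one_rot dsigma_rot add.commute)

lemma rot_sub_m: "rot (a - int m) = rot (a + int m)"
  and rfl_sub_m: "rfl (a - int m) = rfl (a + int m)"
proof -
  have "a - int m - (a + int m) = - n" by (simp add: n_def)
  then show "rot (a - int m) = rot (a + int m)" "rfl (a - int m) = rfl (a + int m)"
    by (simp_all add: rot_eq_iff rfl_eq_iff)
qed

definition half :: nat where "half = (m + 1) div 2"

lemma two_half: "2 * int half = int m + 1"
  using odd_m by (auto simp: half_def elim!: oddE)

definition S :: "(int \<times> bool) set" where "S = {\<one>\<^bsub>D\<^esub>, dsigma [^]\<^bsub>D\<^esub> m}"
definition T :: "(int \<times> bool) set" where "T = {\<one>\<^bsub>D\<^esub>, dtau}"
definition U :: "(int \<times> bool) set" where "U = {\<one>\<^bsub>D\<^esub>}"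
definition K1 :: "(int \<times> bool) set" where "K1 = {rot 0, rfl (int m)}"
definition K2 :: "(int \<times> bool) set" where "K2 = range rot"

lemma S_eq: "S = {rot 0, rot (int m)}"
  and T_eq: "T = {rot 0, rfl 0}"
  and U_eq: "U = {rot 0}"
  by (simp_all add: S_def T_def U_def one_rot dtau_rfl)

lemma rot_2m: "rot (2 * int m) = rot 0"
  by (simp add: rot_eq_iff) (simp add: n_def)

lemma subgroup_S: "subgroup S D"
  using rot_2m rot_sub_m[of 0] by (intro subgroup.intro) (auto simp: S_eq one_rot)

lemma subgroup_T: "subgroup T D"
  by (rule subgroup.intro) (auto simp: T_eq one_rot)

lemma subgroup_U: "subgroup U D"
  by (rule subgroup.intro) (auto simp: U_eq one_rot)

lemma subgroup_K1: "subgroup K1 D"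
  by (rule subgroup.intro) (auto simp: K1_def one_rot)

lemma subgroup_K2: "subgroup K2 D"
  by (rule subgroup.intro) (auto simp: K2_def one_rot)

lemma lcoset_S: "g \<in> carrier D \<Longrightarrow> g <#\<^bsub>D\<^esub> S = {g, g \<otimes>\<^bsub>D\<^esub> rot (int m)}"
  and lcoset_T: "g \<in> carrier D \<Longrightarrow> g <#\<^bsub>D\<^esub> T = {g, g \<otimes>\<^bsub>D\<^esub> rfl 0}"
  and lcoset_U: "g \<in> carrier D \<Longrightarrow> g <#\<^bsub>D\<^esub> U = {g}"
  and lcoset_K1: "g \<in> carrier D \<Longrightarrow> g <#\<^bsub>D\<^esub> K1 = {g, g \<otimes>\<^bsub>D\<^esub> rfl (int m)}"
  by (auto simp: l_coset_def S_eq T_eq U_eq K1_def)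

lemma lcoset_K2:
  assumes "g \<in> carrier D"
  shows "g <#\<^bsub>D\<^esub> K2 = {h \<in> carrier D. snd h = snd g}"
proof -
  have "\<exists>i. h = g \<otimes>\<^bsub>D\<^esub> rot i" if h: "h \<in> carrier D" "snd h = snd g" for h
    using h assms
  proof (elim carrier_cases)
    fix j k assume "h = rot j" "g = rot k"
    then show ?thesis by (intro exI[of _ "j - k"]) simp
  next
    fix j k assume "h = rfl j" "g = rfl k"
    then show ?thesis by (intro exI[of _ "k - j"]) simp
  qed simp_all
  moreover have "g \<otimes>\<^bsub>D\<^esub> rot i \<in> carrier D" "snd (g \<otimes>\<^bsub>D\<^esub> rot i) = snd g" for i
    using assms by (simp_all add: snd_mult)
  ultimately show ?thesis by (auto simp: l_coset_def K2_def)
qed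

lemma lcos_S_rot_eq_iff: "rot a <#\<^bsub>D\<^esub> S = rot b <#\<^bsub>D\<^esub> S \<longleftrightarrow> int m dvd a - b"
  and lcos_S_rfl_eq_iff: "rfl a <#\<^bsub>D\<^esub> S = rfl b <#\<^bsub>D\<^esub> S \<longleftrightarrow> int m dvd a - b"
proof -
  have "int m dvd a - b \<longleftrightarrow> n dvd b - a \<or> n dvd b - (a + int m)"
    using dvd_iff_double_dvd[of "int m" "b - a"] unfolding n_def by (simp add: dvd_diff_commute algebra_simps)
  then show "rot a <#\<^bsub>D\<^esub> S = rot b <#\<^bsub>D\<^esub> S \<longleftrightarrow> int m dvd a - b"
    "rfl a <#\<^bsub>D\<^esub> S = rfl b <#\<^bsub>D\<^esub> S \<longleftrightarrow> int m dvd a - b"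
    by (simp_all only: D.lcos_eq_iff[OF subgroup_S rot_carrier rot_carrier]
        D.lcos_eq_iff[OF subgroup_S rfl_carrier rfl_carrier])
      (simp_all add: lcoset_S rot_eq_iff rfl_eq_iff rfl_sub_m)
qed

lemma rot_rfl_lcos_S_neq [simp]:
  "rot a <#\<^bsub>D\<^esub> S \<noteq> rfl b <#\<^bsub>D\<^esub> S" "rfl b <#\<^bsub>D\<^esub> S \<noteq> rot a <#\<^bsub>D\<^esub> S"
  by (simp_all only: D.lcos_eq_iff[OF subgroup_S rot_carrier rfl_carrier]
      D.lcos_eq_iff[OF subgroup_S rfl_carrier rot_carrier]) (simp_all add: lcoset_S)

lemma lcos_T_rot_eq_iff: "rot a <#\<^bsub>D\<^esub> T = rot b <#\<^bsub>D\<^esub> T \<longleftrightarrow> n dvd a - b"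
  by (simp only: D.lcos_eq_iff[OF subgroup_T rot_carrier rot_carrier])
    (simp add: lcoset_T rot_eq_iff dvd_diff_commute)

lemma lcos_T_rfl_eq: "rfl a <#\<^bsub>D\<^esub> T = rot a <#\<^bsub>D\<^esub> T"
  by (simp add: lcoset_T insert_commute)

lemma crep_singleton [simp]: "crep {h} = h"
  by (simp add: crep_def)

lemma lcos_U: "lcos D U = (\<lambda>h. {h}) ` carrier D"
  by (simp add: D.lcos_eq_image lcoset_U)

lemma mult_rot_m_neq: "g \<in> carrier D \<Longrightarrow> g \<otimes>\<^bsub>D\<^esub> rot (int m) \<noteq> g"
proof -
  assume "g \<in> carrier D"
  moreover have "\<not> n dvd int m" "\<not> n dvd - int m"
    using m_pos unfolding n_def by (auto dest: zdvd_imp_le)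
  ultimately show ?thesis
    by (elim carrier_cases) (simp_all add: rot_eq_iff rfl_eq_iff)
qed

lemma mult_rfl0_neq: "g \<in> carrier D \<Longrightarrow> g \<otimes>\<^bsub>D\<^esub> rfl 0 \<noteq> g"
  by (elim carrier_cases) auto

lemma card_S: "card S = 2"
  using mult_rot_m_neq[of "rot 0"] by (simp add: S_eq)

lemma lcos_S_pair:
  assumes "C \<in> lcos D S"
  shows "C = {crep C, crep C \<otimes>\<^bsub>D\<^esub> rot (int m)}" "crep C \<otimes>\<^bsub>D\<^esub> rot (int m) \<noteq> crep C"
  using D.crep_lcos[OF subgroup_S assms] lcoset_S D.crep_carrier[OF subgroup_S assms]
    mult_rot_m_neq by auto

lemma sum_carrier_D: "(\<Sum>g\<in>carrier D. F g) = (\<Sum>a\<in>{0..<n}. F (rot a) + F (rfl a))"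
proof -
  have "(\<Sum>g\<in>carrier D. F g) = (\<Sum>a\<in>{0..<n}. \<Sum>b\<in>UNIV. F (a, b))"
    by (simp add: carrier_D sum.cartesian_product)
  also have "\<dots> = (\<Sum>a\<in>{0..<n}. F (rot a) + F (rfl a))"
    by (intro sum.cong) (auto simp: UNIV_bool rot_def rfl_def add.commute)
  finally show ?thesis .
qed

lemma sum_lcos_U_restrict:
  fixes x :: "(int \<times> bool) set \<Rightarrow> int"
  assumes K: "subgroup K D" and C0: "C0 \<in> lcos D K"
  shows "(\<Sum>C\<in>lcos D U. x C * (if C0 = crep C <#\<^bsub>D\<^esub> K then 1 else 0)) = (\<Sum>h\<in>C0. x {h})"
proof -
  have "x C * (if C0 = crep C <#\<^bsub>D\<^esub> K then 1 else 0) = (\<Sum>h\<in>C. if h \<in> C0 then x {h} else 0)"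
    if "C \<in> lcos D U" for C
  proof -
    obtain h where "h \<in> carrier D" "C = {h}" using \<open>C \<in> lcos D U\<close> by (auto simp: lcos_U)
    then show ?thesis using D.lcos_eq_iff_mem[OF K C0, of h] by auto
  qed
  then have "(\<Sum>C\<in>lcos D U. x C * (if C0 = crep C <#\<^bsub>D\<^esub> K then 1 else 0))
      = (\<Sum>C\<in>lcos D U. \<Sum>h\<in>C. if h \<in> C0 then x {h} else 0)"
    by (rule sum.cong[OF refl])
  also have "\<dots> = (\<Sum>h\<in>C0. x {h})"
    by (rule D.sum_lcos_restrict[OF subgroup_U K finite_D C0])
  finally show ?thesis .
qed

lemma sum_lcos_S_restrict:
  fixes x :: "(int \<times> bool) set \<Rightarrow> int"
  assumes C0: "C0 \<in> lcos D T"
  shows "(\<Sum>C\<in>lcos D S. x C * ((if C0 = crep C <#\<^bsub>D\<^esub> T then 1 else 0)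
            + (if C0 = (crep C \<otimes>\<^bsub>D\<^esub> rot (int m)) <#\<^bsub>D\<^esub> T then 1 else 0)))
       = (\<Sum>h\<in>C0. x (h <#\<^bsub>D\<^esub> S))"
proof -
  have "x C * ((if C0 = crep C <#\<^bsub>D\<^esub> T then 1 else 0)
            + (if C0 = (crep C \<otimes>\<^bsub>D\<^esub> rot (int m)) <#\<^bsub>D\<^esub> T then 1 else 0))
      = (\<Sum>h\<in>C. if h \<in> C0 then x (h <#\<^bsub>D\<^esub> S) else 0)" if C: "C \<in> lcos D S" for C
  proof -
    let ?c = "crep C" and ?c' = "crep C \<otimes>\<^bsub>D\<^esub> rot (int m)"
    have c: "?c \<in> carrier D" "?c' \<in> carrier D"
      using D.crep_carrier[OF subgroup_S C] by auto
    have "?c <#\<^bsub>D\<^esub> S = C" "?c' <#\<^bsub>D\<^esub> S = C"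
      using D.crep_lcos[OF subgroup_S C] D.lcos_eq_mem[OF subgroup_S C] lcos_S_pair(1)[OF C]
      by (metis insertI1 insertI2 singletonI)+
    moreover have "(\<Sum>h\<in>C. if h \<in> C0 then x (h <#\<^bsub>D\<^esub> S) else 0)
        = (if ?c \<in> C0 then x (?c <#\<^bsub>D\<^esub> S) else 0) + (if ?c' \<in> C0 then x (?c' <#\<^bsub>D\<^esub> S) else 0)"
      by (subst lcos_S_pair(1)[OF C]) (simp add: lcos_S_pair(2)[OF C, symmetric])
    ultimately show ?thesis
      using D.lcos_eq_iff_mem[OF subgroup_T C0 c(1)] D.lcos_eq_iff_mem[OF subgroup_T C0 c(2)]
      by (auto simp: eq_commute[of C0] algebra_simps)
  qed
  then have "(\<Sum>C\<in>lcos D S. x C * ((if C0 = crep C <#\<^bsub>D\<^esub> T then 1 else 0)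
            + (if C0 = (crep C \<otimes>\<^bsub>D\<^esub> rot (int m)) <#\<^bsub>D\<^esub> T then 1 else 0)))
      = (\<Sum>C\<in>lcos D S. \<Sum>h\<in>C. if h \<in> C0 then x (h <#\<^bsub>D\<^esub> S) else 0)"
    by (rule sum.cong[OF refl])
  also have "\<dots> = (\<Sum>h\<in>C0. x (h <#\<^bsub>D\<^esub> S))"
    by (rule D.sum_lcos_restrict[OF subgroup_S subgroup_T finite_D C0])
  finally show ?thesis .
qed

lemma lcos_S_shift_iff:
  assumes "g \<in> carrier D" "h \<in> carrier D"
  shows "g <#\<^bsub>D\<^esub> S = (h \<otimes>\<^bsub>D\<^esub> rot 2) <#\<^bsub>D\<^esub> S \<longleftrightarrow> h <#\<^bsub>D\<^esub> S = (g \<otimes>\<^bsub>D\<^esub> rot (-2)) <#\<^bsub>D\<^esub> S"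
proof -
  have "int m dvd a - (b + 2) \<longleftrightarrow> int m dvd b - (a - 2)" for a b
    using dvd_minus_iff[of "int m" "a - (b + 2)"] by (simp add: algebra_simps)
  moreover have "int m dvd a - (b - 2) \<longleftrightarrow> int m dvd b - (a + 2)" for a b
    using dvd_minus_iff[of "int m" "a - (b - 2)"] by (simp add: algebra_simps)
  ultimately show ?thesis
    using assms by (elim carrier_cases) (simp_all add: lcos_S_rot_eq_iff lcos_S_rfl_eq_iff)
qed

section \<open>The map Psi and its surjectivity\<close>

definition I where "I = {(y1, y2). y1 \<in> pm D S \<and> y2 \<in> pm D T \<and> aug D S y1 + aug D T y2 = 0}"
definition R where "R = pm D U \<times> pm D S \<times> (UNIV :: int set)"
definition iact where "iact = (\<lambda>g (y1, y2). (pact D S g y1, pact D T g y2))"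
definition ract where "ract = (\<lambda>g (x1, x2, x3::int). (pact D U g x1, pact D S g x2, x3))"
definition v1 where "v1 = (cs D S \<one>\<^bsub>D\<^esub>, - cs D T \<one>\<^bsub>D\<^esub>)"
definition v2 where "v2 = (cs D S \<one>\<^bsub>D\<^esub> + cs D S (dsigma [^]\<^bsub>D\<^esub> (2::nat)),
                - (cs D T \<one>\<^bsub>D\<^esub> + cs D T (dsigma [^]\<^bsub>D\<^esub> m)))"
definition v3 where "v3 = ((\<Sum>i<m. cs D S (dsigma [^]\<^bsub>D\<^esub> i) + cs D S (dsigma [^]\<^bsub>D\<^esub> i \<otimes>\<^bsub>D\<^esub> dtau)),
                - (\<Sum>i<2 * m. cs D T (dsigma [^]\<^bsub>D\<^esub> i)))"
definition Psi where "Psi = (\<lambda>(x1, x2, x3). plift D U iact v1 x1 + plift D S iact v2 x2 + zsc2 x3 v3)"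
definition E where "E = {x \<in> R. Psi x = 0}"

lemma iact_Pair [simp]: "iact g (y1, y2) = (pact D S g y1, pact D T g y2)"
  by (simp add: iact_def)

lemma ract_Pair [simp]: "ract g (x1, x2, x3) = (pact D U g x1, pact D S g x2, x3)"
  by (simp add: ract_def)

sublocale iact: lattice_action D zsc2 iact
  by unfold_locales
    (auto simp: iact_def module_hom_iff zsc2.module_axioms zsc2_def pact.add pact.scale
      D.pact_mult[OF subgroup_S] D.pact_mult[OF subgroup_T] split: prod.splits)

sublocale ract: lattice_action D zsc3 ract
  by unfold_locales
    (auto simp: ract_def module_hom_iff zsc3.module_axioms zsc3_def pact.add pact.scale
      D.pact_mult[OF subgroup_U] D.pact_mult[OF subgroup_S] split: prod.splits)

lemma iact_v1: "g \<in> carrier D \<Longrightarrow> iact g v1 = (cs D S g, - cs D T g)"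
  by (simp add: v1_def one_rot pact.neg D.pact_cs[OF subgroup_S] D.pact_cs[OF subgroup_T])

lemma iact_v2: "g \<in> carrier D \<Longrightarrow> iact g v2 = (cs D S g + cs D S (g \<otimes>\<^bsub>D\<^esub> rot 2),
     - (cs D T g + cs D T (g \<otimes>\<^bsub>D\<^esub> rot (int m))))"
  by (simp add: v2_def one_rot pact.neg pact.add pact.diff D.pact_cs[OF subgroup_S]
      D.pact_cs[OF subgroup_T])

lemma fst_v3: "fst v3 = (\<lambda>C. if C \<in> lcos D S then 1 else 0)"
proof
  fix C
  show "fst v3 C = (if C \<in> lcos D S then 1 else 0)"
  proof (cases "C \<in> lcos D S")
    case True
    then obtain g where g: "g \<in> carrier D" "C = g <#\<^bsub>D\<^esub> S" by (rule D.lcosE)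
    have "fst v3 C = (\<Sum>i<m. (if C = rot (int i) <#\<^bsub>D\<^esub> S then 1 else 0)
        + (if C = rfl (int i) <#\<^bsub>D\<^esub> S then 1 else 0))"
      by (simp add: v3_def sum_fun_apply cs_def dtau_rfl)
    also have "\<dots> = 1"
      using g sum_dvd_diff_indicator[OF m_pos] by (elim carrier_cases) (simp_all add: lcos_S_rot_eq_iff lcos_S_rfl_eq_iff)
    finally show ?thesis using True by simp
  qed (auto simp: v3_def sum_fun_apply cs_def dtau_rfl D.lcosI intro!: sum.neutral)
qed

lemma snd_v3: "snd v3 = (\<lambda>C. if C \<in> lcos D T then -1 else 0)"
proof
  fix C
  show "snd v3 C = (if C \<in> lcos D T then -1 else 0)"
  proof (cases "C \<in> lcos D T")
    case True
    then obtain j where j: "C = rot j <#\<^bsub>D\<^esub> T"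
      by (auto elim!: D.lcosE carrier_cases simp: lcos_T_rfl_eq)
    have "snd v3 C = - (\<Sum>i<2 * m. if C = rot (int i) <#\<^bsub>D\<^esub> T then 1 else 0)"
      by (simp add: v3_def sum_fun_apply cs_def)
    also have "\<dots> = -1"
      using sum_dvd_diff_indicator[of "2 * m" j] m_pos by (simp add: j lcos_T_rot_eq_iff n_def[symmetric])
    finally show ?thesis using True by simp
  qed (auto simp: v3_def sum_fun_apply cs_def D.lcosI intro!: sum.neutral)
qed

lemma iact_v3:
  assumes "g \<in> carrier D"
  shows "iact g v3 = v3"
proof -
  have "pact D S g (fst v3) = fst v3"
    unfolding fst_v3 using D.lcos_lmult_closed[OF subgroup_S D.inv_closed[OF assms]]
    by (auto simp: pact_def fun_eq_iff)
  moreover have "pact D T g (snd v3) = snd v3"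
    unfolding snd_v3 using D.lcos_lmult_closed[OF subgroup_T D.inv_closed[OF assms]]
    by (auto simp: pact_def fun_eq_iff)
  ultimately show ?thesis by (metis iact_Pair prod.collapse)
qed

lemma v1_fixed: "\<forall>k\<in>U. iact k v1 = v1"
  by (simp add: U_eq iact_v1) (simp add: v1_def one_rot)

lemma v2_fixed: "\<forall>k\<in>S. iact k v2 = v2"
proof
  fix k assume "k \<in> S"
  then have "k = rot 0 \<or> k = rot (int m)" by (simp add: S_eq)
  moreover have "cs D S (rot (int m)) = cs D S (rot 0)" "cs D S (rot (int m + 2)) = cs D S (rot 2)"
    by (auto simp: cs_def lcos_S_rot_eq_iff)
  ultimately show "iact k v2 = v2"
    by (auto simp: iact_v2 rot_2m) (simp_all add: v2_def one_rot add.commute)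
qed

lemma Psi_Pair: "Psi (x1, x2, x3) = plift D U iact v1 x1 + plift D S iact v2 x2 + zsc2 x3 v3"
  by (simp add: Psi_def)

lemma module_hom_Psi: "module_hom zsc3 zsc2 Psi"
proof -
  interpret lift1: module_hom zsc zsc2 "coset_lift zsc2 D U iact v1"
    by (rule iact.module_hom_coset_lift)
  interpret lift2: module_hom zsc zsc2 "coset_lift zsc2 D S iact v2"
    by (rule iact.module_hom_coset_lift)
  show ?thesis
    by unfold_locales
      (auto simp: Psi_def plift_eq_coset_lift lift1.add lift2.add lift1.scale lift2.scale zsc3_def
        algebra_simps split: prod.splits)
qed

sublocale Psi: module_hom zsc3 zsc2 Psi
  by (rule module_hom_Psi)

lemma subspace_R: "zsc3.subspace R"
  by (auto simp: zsc3.subspace_def R_def zsc3_def pm_add pm_zsc pm_zero zero_prod_def)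

lemmas R_add = zsc3.subspace_add[OF subspace_R]
  and R_diff = zsc3.subspace_diff[OF subspace_R]
  and R_scale = zsc3.subspace_scale[OF subspace_R]
  and R_sum = zsc3.subspace_sum[OF subspace_R]

lemma R_ract: "x \<in> R \<Longrightarrow> ract g x \<in> R"
  by (auto simp: R_def ract_def pact_in_pm)

lemma Psi_ract: assumes "x \<in> R" "g \<in> carrier D" shows "Psi (ract g x) = iact g (Psi x)"
proof -
  obtain x1 x2 x3 where x: "x = (x1, x2, x3)" "x1 \<in> pm D U" "x2 \<in> pm D S" using assms(1) by (auto simp: R_def)
  have "Psi (ract g x) = iact g (plift D U iact v1 x1) + iact g (plift D S iact v2 x2) + zsc2 x3 v3"
    by (simp add: x Psi_Pair plift_eq_coset_lift iact.coset_lift_pact[OF subgroup_U finite_D v1_fixed assms(2) x(2)]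
         iact.coset_lift_pact[OF subgroup_S finite_D v2_fixed assms(2) x(3)])
  also have "\<dots> = iact g (Psi x)"
    by (simp add: x Psi_Pair iact.act_add iact.act_scale iact_v3 assms(2))
  finally show ?thesis .
qed

context
  fixes g assumes g: "g \<in> carrier D"
begin

lemma fst_plift_v1:
  "fst (plift D U iact v1 x) (g <#\<^bsub>D\<^esub> S) = x {g} + x {g \<otimes>\<^bsub>D\<^esub> rot (int m)}"
proof -
  have "fst (plift D U iact v1 x) (g <#\<^bsub>D\<^esub> S)
      = (\<Sum>C\<in>lcos D U. x C * (if g <#\<^bsub>D\<^esub> S = crep C <#\<^bsub>D\<^esub> S then 1 else 0))"
    by (auto simp: plift_def fst_sum sum_fun_apply zsc2_def iact_v1 D.crep_carrier[OF subgroup_U]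
        cs_def intro!: sum.cong)
  also have "\<dots> = (\<Sum>h\<in>g <#\<^bsub>D\<^esub> S. x {h})"
    by (rule sum_lcos_U_restrict[OF subgroup_S D.lcosI[OF g]])
  also have "\<dots> = x {g} + x {g \<otimes>\<^bsub>D\<^esub> rot (int m)}"
    using g mult_rot_m_neq by (simp add: lcoset_S)
  finally show ?thesis .
qed

lemma fst_plift_v2:
  "fst (plift D S iact v2 x) (g <#\<^bsub>D\<^esub> S) = x (g <#\<^bsub>D\<^esub> S) + x ((g \<otimes>\<^bsub>D\<^esub> rot (-2)) <#\<^bsub>D\<^esub> S)"
proof -
  have "fst (plift D S iact v2 x) (g <#\<^bsub>D\<^esub> S)
      = (\<Sum>C\<in>lcos D S. x C * ((if g <#\<^bsub>D\<^esub> S = crep C <#\<^bsub>D\<^esub> S then 1 else 0)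
           + (if g <#\<^bsub>D\<^esub> S = (crep C \<otimes>\<^bsub>D\<^esub> rot 2) <#\<^bsub>D\<^esub> S then 1 else 0)))"
    by (auto simp: plift_def fst_sum sum_fun_apply zsc2_def iact_v2 D.crep_carrier[OF subgroup_S]
        cs_def intro!: sum.cong)
  also have "\<dots> = (\<Sum>C\<in>lcos D S. (if C = g <#\<^bsub>D\<^esub> S then x C else 0)
           + (if C = (g \<otimes>\<^bsub>D\<^esub> rot (-2)) <#\<^bsub>D\<^esub> S then x C else 0))"
  proof (rule sum.cong[OF refl])
    fix C assume C: "C \<in> lcos D S"
    have "g <#\<^bsub>D\<^esub> S = (crep C \<otimes>\<^bsub>D\<^esub> rot 2) <#\<^bsub>D\<^esub> S \<longleftrightarrow> C = (g \<otimes>\<^bsub>D\<^esub> rot (-2)) <#\<^bsub>D\<^esub> S"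
      using lcos_S_shift_iff[OF g D.crep_carrier[OF subgroup_S C]] D.crep_lcos[OF subgroup_S C]
      by simp
    then show "x C * ((if g <#\<^bsub>D\<^esub> S = crep C <#\<^bsub>D\<^esub> S then 1 else 0)
           + (if g <#\<^bsub>D\<^esub> S = (crep C \<otimes>\<^bsub>D\<^esub> rot 2) <#\<^bsub>D\<^esub> S then 1 else 0))
        = (if C = g <#\<^bsub>D\<^esub> S then x C else 0) + (if C = (g \<otimes>\<^bsub>D\<^esub> rot (-2)) <#\<^bsub>D\<^esub> S then x C else 0)"
      using D.crep_lcos[OF subgroup_S C] by (auto simp: algebra_simps)
  qed
  also have "\<dots> = x (g <#\<^bsub>D\<^esub> S) + x ((g \<otimes>\<^bsub>D\<^esub> rot (-2)) <#\<^bsub>D\<^esub> S)"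
    using g D.lcosI finite_D D.finite_lcos by (simp add: sum.distrib sum.delta')
  finally show ?thesis .
qed

lemma snd_plift_v1:
  "snd (plift D U iact v1 x) (g <#\<^bsub>D\<^esub> T) = - (x {g} + x {g \<otimes>\<^bsub>D\<^esub> rfl 0})"
proof -
  have "snd (plift D U iact v1 x) (g <#\<^bsub>D\<^esub> T)
      = - (\<Sum>C\<in>lcos D U. x C * (if g <#\<^bsub>D\<^esub> T = crep C <#\<^bsub>D\<^esub> T then 1 else 0))"
    by (auto simp: plift_def snd_sum sum_fun_apply zsc2_def iact_v1 D.crep_carrier[OF subgroup_U]
        cs_def sum_negf[symmetric] intro!: sum.cong)
  also have "(\<Sum>C\<in>lcos D U. x C * (if g <#\<^bsub>D\<^esub> T = crep C <#\<^bsub>D\<^esub> T then 1 else 0))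
      = (\<Sum>h\<in>g <#\<^bsub>D\<^esub> T. x {h})"
    by (rule sum_lcos_U_restrict[OF subgroup_T D.lcosI[OF g]])
  also have "\<dots> = x {g} + x {g \<otimes>\<^bsub>D\<^esub> rfl 0}"
    using g mult_rfl0_neq by (simp add: lcoset_T)
  finally show ?thesis .
qed

lemma snd_plift_v2:
  "snd (plift D S iact v2 x) (g <#\<^bsub>D\<^esub> T) = - (x (g <#\<^bsub>D\<^esub> S) + x ((g \<otimes>\<^bsub>D\<^esub> rfl 0) <#\<^bsub>D\<^esub> S))"
proof -
  have "snd (plift D S iact v2 x) (g <#\<^bsub>D\<^esub> T)
      = - (\<Sum>C\<in>lcos D S. x C * ((if g <#\<^bsub>D\<^esub> T = crep C <#\<^bsub>D\<^esub> T then 1 else 0)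
          + (if g <#\<^bsub>D\<^esub> T = (crep C \<otimes>\<^bsub>D\<^esub> rot (int m)) <#\<^bsub>D\<^esub> T then 1 else 0)))"
    by (auto simp: plift_def snd_sum sum_fun_apply zsc2_def iact_v2 D.crep_carrier[OF subgroup_S]
        cs_def sum_negf[symmetric] intro!: sum.cong)
  also have "(\<Sum>C\<in>lcos D S. x C * ((if g <#\<^bsub>D\<^esub> T = crep C <#\<^bsub>D\<^esub> T then 1 else 0)
          + (if g <#\<^bsub>D\<^esub> T = (crep C \<otimes>\<^bsub>D\<^esub> rot (int m)) <#\<^bsub>D\<^esub> T then 1 else 0)))
      = (\<Sum>h\<in>g <#\<^bsub>D\<^esub> T. x (h <#\<^bsub>D\<^esub> S))"
    by (rule sum_lcos_S_restrict[OF D.lcosI[OF g]])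
  also have "\<dots> = x (g <#\<^bsub>D\<^esub> S) + x ((g \<otimes>\<^bsub>D\<^esub> rfl 0) <#\<^bsub>D\<^esub> S)"
    using g mult_rfl0_neq by (simp add: lcoset_T)
  finally show ?thesis .
qed

lemma Psi_S:
  "fst (Psi (x1, x2, x3)) (g <#\<^bsub>D\<^esub> S)
    = x1 {g} + x1 {g \<otimes>\<^bsub>D\<^esub> rot (int m)} + x2 (g <#\<^bsub>D\<^esub> S) + x2 ((g \<otimes>\<^bsub>D\<^esub> rot (-2)) <#\<^bsub>D\<^esub> S) + x3"
  using D.lcosI[OF g] by (simp add: Psi_def fst_plift_v1 fst_plift_v2 zsc2_def fst_v3)

lemma Psi_T:
  "snd (Psi (x1, x2, x3)) (g <#\<^bsub>D\<^esub> T)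
    = - (x1 {g} + x1 {g \<otimes>\<^bsub>D\<^esub> rfl 0} + x2 (g <#\<^bsub>D\<^esub> S) + x2 ((g \<otimes>\<^bsub>D\<^esub> rfl 0) <#\<^bsub>D\<^esub> S) + x3)"
  using D.lcosI[OF g] by (simp add: Psi_def snd_plift_v1 snd_plift_v2 zsc2_def snd_v3)

end

definition total_aug where "total_aug y = aug D S (fst y) + aug D T (snd y)"

lemma total_aug_add: "total_aug (x + y) = total_aug x + total_aug y"
  by (simp add: total_aug_def aug.add)
lemma total_aug_zsc2: "total_aug (zsc2 a y) = a * total_aug y"
  by (simp add: total_aug_def zsc2_def aug_zsc algebra_simps)
lemma total_aug_sum: "total_aug (\<Sum>i\<in>A. f i) = (\<Sum>i\<in>A. total_aug (f i))"
  by (simp add: total_aug_def fst_sum snd_sum aug.sum sum.distrib)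
lemma total_aug_iact: "g \<in> carrier D \<Longrightarrow> total_aug (iact g y) = total_aug y"
  by (cases y) (simp add: total_aug_def D.aug_pact[OF subgroup_S finite_D] D.aug_pact[OF subgroup_T finite_D])

lemma total_aug_v1: "total_aug v1 = 0"
  by (simp add: total_aug_def v1_def aug.minus D.aug_cs[OF finite_D])
lemma total_aug_v2: "total_aug v2 = 0"
  by (simp add: total_aug_def v2_def aug.minus aug.add aug.diff D.aug_cs[OF finite_D] one_rot)
lemma total_aug_v3: "total_aug v3 = 0"
  by (simp add: total_aug_def v3_def aug.minus aug.add aug.sum D.aug_cs[OF finite_D] dtau_rfl)

lemma total_aug_plift: assumes "total_aug v = 0" "\<forall>k\<in>K. iact k v = v" "subgroup K D"
  shows "total_aug (plift D K iact v x) = 0"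
  using assms by (simp add: plift_def total_aug_sum total_aug_zsc2 total_aug_iact D.crep_carrier)

lemma Psi_aug: "total_aug (Psi x) = 0"
  by (cases x) (simp add: Psi_Pair total_aug_add total_aug_zsc2 total_aug_v3 total_aug_plift[OF total_aug_v1 v1_fixed subgroup_U]
      total_aug_plift[OF total_aug_v2 v2_fixed subgroup_S])

lemma plift_in_pm: assumes "subgroup K D"
  shows "fst (plift D K iact v x) \<in> pm D S" "snd (plift D K iact v x) \<in> pm D T"
  unfolding plift_def fst_sum snd_sum
  by (auto intro!: pm_sum pm_zsc pact_in_pm simp: zsc2_def iact_def split: prod.splits)

lemma v3_pm: "fst v3 \<in> pm D S" "snd v3 \<in> pm D T"
  by (auto simp: fst_v3 snd_v3 pm_def)

lemma Psi_pm: "fst (Psi x) \<in> pm D S" "snd (Psi x) \<in> pm D T"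
  by (cases x, simp add: Psi_Pair zsc2_def, intro pm_add plift_in_pm subgroup_U subgroup_S pm_zsc v3_pm)+

lemma Psi_I: "Psi x \<in> I"
  using Psi_pm[of x] Psi_aug[of x] by (cases "Psi x") (auto simp: I_def total_aug_def)

abbreviation L where "L \<equiv> Psi ` R"

lemma subspace_L: "zsc2.subspace L"
  by (rule Psi.subspace_image[OF subspace_R])

lemmas L_add = zsc2.subspace_add[OF subspace_L]
  and L_diff = zsc2.subspace_diff[OF subspace_L]
  and L_uminus = zsc2.subspace_neg[OF subspace_L]
  and L_zsc2 = zsc2.subspace_scale[OF subspace_L]
  and L_sum = zsc2.subspace_sum[OF subspace_L]

lemma Psi_cs_U_in_L: "g \<in> carrier D \<Longrightarrow> (cs D S g, - cs D T g) \<in> L"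
  using iact.coset_lift_cs[OF subgroup_U finite_D v1_fixed]
  by (intro image_eqI[of _ _ "(cs D U g, 0, 0)"])
    (simp_all add: Psi_Pair plift_eq_coset_lift module_hom.zero[OF iact.module_hom_coset_lift]
      iact_v1 R_def D.pm_cs)

lemma Psi_cs_S_in_L: "g \<in> carrier D \<Longrightarrow> iact g v2 \<in> L"
  using iact.coset_lift_cs[OF subgroup_S finite_D v2_fixed]
  by (intro image_eqI[of _ _ "(0, cs D S g, 0)"])
    (simp_all add: Psi_Pair plift_eq_coset_lift module_hom.zero[OF iact.module_hom_coset_lift]
      R_def D.pm_cs)

lemma L_T_diff_trans: "(0, cs D T x - cs D T y) \<in> L \<Longrightarrow> (0, cs D T y - cs D T z) \<in> L \<Longrightarrow> (0, cs D T x - cs D T z) \<in> L"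
  using L_add by fastforce

lemma cs_S_mult_rot_m: "g \<in> carrier D \<Longrightarrow> cs D S (g \<otimes>\<^bsub>D\<^esub> rot (int m)) = cs D S g"
  using D.lcos_eq_mem[OF subgroup_S D.lcosI, of g "g \<otimes>\<^bsub>D\<^esub> rot (int m)"]
  by (simp add: cs_def lcoset_S)

lemma L_T_diff_rot_m: "g \<in> carrier D \<Longrightarrow> (0, cs D T g - cs D T (g \<otimes>\<^bsub>D\<^esub> rot (int m))) \<in> L"
  using L_diff[OF Psi_cs_U_in_L Psi_cs_U_in_L, of "g \<otimes>\<^bsub>D\<^esub> rot (int m)" g] L_uminus
  by (fastforce simp: cs_S_mult_rot_m)

lemma L_T_diff_rot_2: "g \<in> carrier D \<Longrightarrow> (0, cs D T (g \<otimes>\<^bsub>D\<^esub> rot 2) - cs D T g) \<in> L"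
proof -
  assume g: "g \<in> carrier D"
  have "iact g v2 - (cs D S g, - cs D T g) - (cs D S (g \<otimes>\<^bsub>D\<^esub> rot 2), - cs D T (g \<otimes>\<^bsub>D\<^esub> rot 2)) \<in> L"
    using g by (intro L_diff Psi_cs_U_in_L Psi_cs_S_in_L) simp_all
  then have "(0, cs D T (g \<otimes>\<^bsub>D\<^esub> rot 2) - cs D T (g \<otimes>\<^bsub>D\<^esub> rot (int m))) \<in> L"
    by (simp add: iact_v2[OF g])
  moreover have "(0, cs D T (g \<otimes>\<^bsub>D\<^esub> rot (int m)) - cs D T g) \<in> L"
    using L_uminus[OF L_T_diff_rot_m[OF g]] by simp
  ultimately show ?thesis by (rule L_T_diff_trans)
qed

lemma L_T_diff_rot_even: "g \<in> carrier D \<Longrightarrow> (0, cs D T (g \<otimes>\<^bsub>D\<^esub> rot (2 * int l)) - cs D T g) \<in> L"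
proof (induction l)
  case 0
  then show ?case using zsc2.subspace_0[OF subspace_L] by (simp add: zero_prod_def zero_fun_def)
next
  case (Suc l)
  have eq: "g \<otimes>\<^bsub>D\<^esub> rot (2 * int (Suc l)) = g \<otimes>\<^bsub>D\<^esub> rot (2 * int l) \<otimes>\<^bsub>D\<^esub> rot 2"
    using Suc.prems by (simp add: D.m_assoc algebra_simps)
  show ?case
    unfolding eq by (rule L_T_diff_trans[OF L_T_diff_rot_2 Suc.IH]) (simp_all add: Suc.prems)
qed

text \<open>Since m + 1 is even, \<sigma> lies in the subgroup generated by \<sigma>^2 and \<sigma>^m.\<close>

lemma L_T_diff_rot_1: "g \<in> carrier D \<Longrightarrow> (0, cs D T (g \<otimes>\<^bsub>D\<^esub> rot 1) - cs D T g) \<in> L"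
proof -
  assume g: "g \<in> carrier D"
  have "g \<otimes>\<^bsub>D\<^esub> rot 1 \<otimes>\<^bsub>D\<^esub> rot (int m) = g \<otimes>\<^bsub>D\<^esub> rot (2 * int half)"
    using g two_half by (simp add: D.m_assoc add.commute)
  then show ?thesis
    using L_T_diff_rot_m[of "g \<otimes>\<^bsub>D\<^esub> rot 1"] L_T_diff_rot_even[OF g, of half] g
    by (auto intro: L_T_diff_trans)
qed

lemma L_T_diff: "h \<in> carrier D \<Longrightarrow> (0, cs D T h - cs D T (rot 0)) \<in> L"
proof -
  have rot: "(0, cs D T (rot (int i)) - cs D T (rot 0)) \<in> L" for i
  proof (induction i)
    case 0
    then show ?case using zsc2.subspace_0[OF subspace_L] by (simp add: zero_prod_def zero_fun_def)
  next
    case (Suc i)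
    have "rot (int (Suc i)) = rot (int i) \<otimes>\<^bsub>D\<^esub> rot 1"
      by (simp add: add.commute)
    then show ?case
      by (simp only:) (rule L_T_diff_trans[OF L_T_diff_rot_1 Suc], simp)
  qed
  have "cs D T (rfl j) = cs D T (rot j)" for j
    by (simp add: cs_def lcos_T_rfl_eq)
  then show "h \<in> carrier D \<Longrightarrow> ?thesis"
    using rot by (elim carrier_cases) (metis nonneg_int_cases)+
qed

lemma I_subset_L: "y \<in> I \<Longrightarrow> y \<in> L"
proof -
  assume "y \<in> I"
  then obtain a b where y: "y = (a, b)" and a: "a \<in> pm D S" and b: "b \<in> pm D T"
    and aug_ab: "aug D S a + aug D T b = 0"
    by (auto simp: I_def)
  define c where "c = (\<Sum>C\<in>lcos D S. zsc (a C) (cs D T (crep C)))"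
  have "(\<Sum>C\<in>lcos D S. zsc2 (a C) (cs D S (crep C), - cs D T (crep C))) = (a, - c)"
    by (simp add: c_def zsc2_Pair sum_prod sum_negf D.pm_decomp[OF subgroup_S finite_D a, symmetric])
  moreover have "(\<Sum>C\<in>lcos D S. zsc2 (a C) (cs D S (crep C), - cs D T (crep C))) \<in> L"
    by (intro L_sum L_zsc2 Psi_cs_U_in_L D.crep_carrier[OF subgroup_S])
  ultimately have ac: "(a, - c) \<in> L" by simp
  define b' where "b' = b + c"
  have b'_pm: "b' \<in> pm D T"
    unfolding b'_def c_def using b by (intro pm_add pm_sum pm_zsc D.pm_cs D.crep_carrier[OF subgroup_S])
  have "aug D T c = (\<Sum>C\<in>lcos D S. a C)"
    by (simp add: c_def aug.sum aug_zsc D.aug_cs[OF finite_D] D.crep_carrier[OF subgroup_S])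
  then have "(\<Sum>C\<in>lcos D T. b' C) = 0"
    using aug_ab by (simp add: b'_def aug_def sum.distrib)
  then have "b' = (\<Sum>C\<in>lcos D T. zsc (b' C) (cs D T (crep C) - cs D T (rot 0)))"
    using D.pm_decomp[OF subgroup_T finite_D b'_pm]
    by (simp add: zsc.scale_right_diff_distrib sum_subtractf zsc.scale_sum_left[symmetric])
  then have "(0, b') = (\<Sum>C\<in>lcos D T. zsc2 (b' C) (0, cs D T (crep C) - cs D T (rot 0)))"
    by (simp add: zsc2_Pair sum_prod)
  also have "\<dots> \<in> L"
    by (intro L_sum L_zsc2 L_T_diff D.crep_carrier[OF subgroup_T])
  finally have "(0, b') \<in> L" .
  with ac have "(a, - c) + (0, b') \<in> L" by (rule L_add)
  then show "y \<in> L" by (simp add: y b'_def)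
qed

theorem Psi_surj: "Psi ` R = I"
  using I_subset_L Psi_I by blast

section \<open>The kernel of Psi as a permutation lattice\<close>

lemma Psi_eq_0I:
  assumes "\<And>g. g \<in> carrier D \<Longrightarrow> fst (Psi x) (g <#\<^bsub>D\<^esub> S) = 0"
    and "\<And>g. g \<in> carrier D \<Longrightarrow> snd (Psi x) (g <#\<^bsub>D\<^esub> T) = 0"
  shows "Psi x = 0"
  using D.pm_eq_0I[OF Psi_pm(1) assms(1)] D.pm_eq_0I[OF Psi_pm(2) assms(2)]
  by (simp add: prod_eq_iff)

lemma sum_dvd_diff_double_indicator: "(\<Sum>i<m. of_bool (int m dvd j - 2 * int i)) = (1::int)"
proof -
  have "int m dvd j - 2 * int i \<longleftrightarrow> int m dvd int half * j - int i" for i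
  proof -
    have eq: "(int half * j - int i) * 2 = (j - 2 * int i) + int m * j"
      using two_half by (simp add: algebra_simps)
    have "int m dvd j - 2 * int i \<longleftrightarrow> int m dvd (int half * j - int i) * 2"
      unfolding eq by (rule dvd_add_left_iff[symmetric]) (rule dvd_triv_left)
    also have "\<dots> \<longleftrightarrow> int m dvd int half * j - int i"
      using odd_m by (intro coprime_dvd_mult_left_iff) simp
    finally show ?thesis .
  qed
  then show ?thesis
    using sum_dvd_diff_indicator[OF m_pos, of "int half * j"] by (simp add: of_bool_def)
qed

lemma count_e1S:
  "(\<Sum>l<half. of_bool (int m dvd j - 4 * int l) + of_bool (int m dvd j - (4 * int l + 2)))
    = 1 + (of_bool (int m dvd j) :: int)"
proof -
  let ?f = "\<lambda>i. of_bool (int m dvd j - 2 * int i) :: int"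
  have "(\<Sum>l<half. of_bool (int m dvd j - 4 * int l) + of_bool (int m dvd j - (4 * int l + 2)))
      = (\<Sum>l<half. ?f (2 * l) + ?f (2 * l + 1))"
    by (intro sum.cong refl) (simp add: algebra_simps)
  also have "\<dots> = (\<Sum>i<2 * half. ?f i)"
    by (rule sum_pairs)
  also have "2 * half = Suc m"
    using two_half by linarith
  also have "(\<Sum>i<Suc m. ?f i) = 1 + ?f m"
    by (simp only: sum.lessThan_Suc sum_dvd_diff_double_indicator add.commute)
  also have "int m dvd j - 2 * int m \<longleftrightarrow> int m dvd j"
    using dvd_add_times_triv_right_iff[of "int m" j "- 2"] by simp
  finally show ?thesis .
qed

lemma of_bool_n_dvd:
  "of_bool (n dvd x) + of_bool (n dvd x - int m) = (of_bool (int m dvd x) :: int)"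
proof -
  have "int m \<noteq> 0" using m_pos by simp
  then show ?thesis
    using dvd_iff_double_dvd[of "int m" x] not_double_dvd_both[of "int m" x]
    unfolding n_def by (cases "2 * int m dvd x"; cases "2 * int m dvd x - int m") simp_all
qed

definition e1U where "e1U = - (cs D U (rot 0) + cs D U (rfl (int m)))"
definition e1S where "e1S = (\<Sum>l<half. cs D S (rot (4 * int l)) + cs D S (rfl (4 * int l + 2)))"
definition e1 where "e1 = (e1U, e1S, -1)"

definition e2U where "e2U = (\<lambda>C. if C \<in> lcos D U \<and> snd (crep C) then -1 else 0 :: int)"
definition e2S where
  "e2S = (\<lambda>C. if C \<in> lcos D S then (if snd (crep C) then int half else int half - 1) else 0)"
definition e2 where "e2 = (e2U, e2S, 1 - int m)"

lemma e1U_pm: "e1U \<in> pm D U" and e1S_pm: "e1S \<in> pm D S"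
  and e2U_pm: "e2U \<in> pm D U" and e2S_pm: "e2S \<in> pm D S"
  by (simp_all add: e1U_def e1S_def e2U_def e2S_def pm_diff pm_uminus pm_add pm_sum D.pm_cs)
    (simp_all add: pm_def)

lemma e1_R: "e1 \<in> R" and e2_R: "e2 \<in> R"
  by (simp_all add: R_def e1_def e2_def e1U_pm e1S_pm e2U_pm e2S_pm)

lemma snd_crep_S:
  assumes "g \<in> carrier D"
  shows "snd (crep (g <#\<^bsub>D\<^esub> S)) = snd g"
proof -
  have "crep (g <#\<^bsub>D\<^esub> S) \<in> {g, g \<otimes>\<^bsub>D\<^esub> rot (int m)}"
    using D.crep_mem[OF subgroup_S D.lcosI[OF assms]] lcoset_S[OF assms] by simp
  then show ?thesis using assms by (auto simp: snd_mult)
qed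

lemma e1U_singleton:
  "h \<in> carrier D \<Longrightarrow> e1U {h} = - (of_bool (h = rot 0) + of_bool (h = rfl (int m)))"
  by (simp add: e1U_def cs_def lcoset_U)

lemma e1U_rot: "e1U {rot j} = - of_bool (n dvd j)"
  and e1U_rfl: "e1U {rfl j} = - of_bool (n dvd j - int m)"
  by (simp_all add: e1U_def cs_def lcoset_U rot_eq_iff rfl_eq_iff)

lemma e2U_singleton: "h \<in> carrier D \<Longrightarrow> e2U {h} = - of_bool (snd h)"
  by (simp add: e2U_def lcos_U)

lemma e2S_lcos: "g \<in> carrier D \<Longrightarrow> e2S (g <#\<^bsub>D\<^esub> S) = (if snd g then int half else int half - 1)"
  by (simp add: e2S_def D.lcosI snd_crep_S)

lemma e1S_rot: "e1S (rot j <#\<^bsub>D\<^esub> S) = (\<Sum>l<half. of_bool (int m dvd j - 4 * int l))"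
  and e1S_rfl: "e1S (rfl j <#\<^bsub>D\<^esub> S) = (\<Sum>l<half. of_bool (int m dvd j - (4 * int l + 2)))"
  by (simp_all add: e1S_def sum_fun_apply cs_def lcos_S_rot_eq_iff lcos_S_rfl_eq_iff of_bool_def)

lemma fst_rot: "0 \<le> j \<Longrightarrow> j < n \<Longrightarrow> fst (rot j) = j"
  and fst_rfl: "0 \<le> j \<Longrightarrow> j < n \<Longrightarrow> fst (rfl j) = j"
  by (simp_all add: rot_def rfl_def)

lemma n_dvd_sub_2m: "n dvd x - 2 * int m \<longleftrightarrow> n dvd x"
proof -
  have "x - 2 * int m = x + (- 1) * n" by (simp add: n_def)
  then show ?thesis by (simp only: dvd_add_times_triv_right_iff)
qed

lemma e1U_pair_S: "g \<in> carrier D \<Longrightarrow> e1U {g} + e1U {g \<otimes>\<^bsub>D\<^esub> rot (int m)} = - of_bool (int m dvd fst g)"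
  and e1U_pair_T: "g \<in> carrier D \<Longrightarrow> e1U {g} + e1U {g \<otimes>\<^bsub>D\<^esub> rfl 0} = - of_bool (int m dvd fst g)"
  by (auto elim!: carrier_cases simp: fst_rot fst_rfl e1U_rot e1U_rfl rot_sub_m[symmetric]
      n_dvd_sub_2m of_bool_n_dvd[symmetric])

lemma e1S_rot_sub_2: "e1S (rot (j - 2) <#\<^bsub>D\<^esub> S) = e1S (rfl j <#\<^bsub>D\<^esub> S)"
  and e1S_rfl_add_2: "e1S (rfl (j + 2) <#\<^bsub>D\<^esub> S) = e1S (rot j <#\<^bsub>D\<^esub> S)"
  by (simp_all only: e1S_rot e1S_rfl) (intro sum.cong refl; simp add: algebra_simps)+

lemma e1S_rot_rfl: "e1S (rot j <#\<^bsub>D\<^esub> S) + e1S (rfl j <#\<^bsub>D\<^esub> S) = 1 + of_bool (int m dvd j)"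
  by (simp only: e1S_rot e1S_rfl sum.distrib[symmetric] count_e1S)

lemma e1S_pair_S:
  "g \<in> carrier D \<Longrightarrow> e1S (g <#\<^bsub>D\<^esub> S) + e1S ((g \<otimes>\<^bsub>D\<^esub> rot (-2)) <#\<^bsub>D\<^esub> S) = 1 + of_bool (int m dvd fst g)"
  and e1S_pair_T:
  "g \<in> carrier D \<Longrightarrow> e1S (g <#\<^bsub>D\<^esub> S) + e1S ((g \<otimes>\<^bsub>D\<^esub> rfl 0) <#\<^bsub>D\<^esub> S) = 1 + of_bool (int m dvd fst g)"
  using e1S_rot_rfl
  by (auto elim!: carrier_cases simp: fst_rot fst_rfl e1S_rot_sub_2 e1S_rfl_add_2 add.commute)

lemma Psi_e1: "Psi e1 = 0"
proof (rule Psi_eq_0I)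
  fix g assume g: "g \<in> carrier D"
  show "fst (Psi e1) (g <#\<^bsub>D\<^esub> S) = 0"
    using e1U_pair_S[OF g] e1S_pair_S[OF g]
    by (simp add: e1_def Psi_S[OF g])
  show "snd (Psi e1) (g <#\<^bsub>D\<^esub> T) = 0"
    using e1U_pair_T[OF g] e1S_pair_T[OF g]
    by (simp add: e1_def Psi_T[OF g])
qed

lemma Psi_e2: "Psi e2 = 0"
proof (rule Psi_eq_0I)
  fix g assume g: "g \<in> carrier D"
  have "half \<noteq> 0" using two_half by auto
  then show "fst (Psi e2) (g <#\<^bsub>D\<^esub> S) = 0" "snd (Psi e2) (g <#\<^bsub>D\<^esub> T) = 0"
    using g two_half
    by (simp_all add: e2_def Psi_S[OF g] Psi_T[OF g] e2U_singleton
        e2S_lcos snd_mult)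
qed

lemma cs_S_rot_eq: "int m dvd a - b \<Longrightarrow> cs D S (rot a) = cs D S (rot b)"
  and cs_S_rfl_eq: "int m dvd a - b \<Longrightarrow> cs D S (rfl a) = cs D S (rfl b)"
  unfolding cs_def using lcos_S_rot_eq_iff[of a b] lcos_S_rfl_eq_iff[of a b] by simp_all

lemma pact_rfl_m_e1S: "pact D S (rfl (int m)) e1S = e1S"
proof -
  let ?F = "\<lambda>l::nat. cs D S (rot (4 * int l)) + cs D S (rfl (4 * int l + 2))"
  have "pact D S (rfl (int m)) e1S
      = (\<Sum>l<half. cs D S (rfl (int m - 4 * int l)) + cs D S (rot (int m - (4 * int l + 2))))"
    by (simp add: e1S_def pact.sum pact.add D.pact_cs[OF subgroup_S])
  also have "\<dots> = (\<Sum>l<half. ?F (half - Suc l))"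
  proof (rule sum.cong[OF refl])
    fix l assume "l \<in> {..<half}"
    then have "int (half - Suc l) = int half - 1 - int l" by auto
    then have "int m - 4 * int l - (4 * int (half - Suc l) + 2) = int m * (-1)"
      "int m - (4 * int l + 2) - 4 * int (half - Suc l) = int m * (-1)"
      using two_half by (simp_all add: algebra_simps)
    then have "cs D S (rfl (int m - 4 * int l)) = cs D S (rfl (4 * int (half - Suc l) + 2))"
      "cs D S (rot (int m - (4 * int l + 2))) = cs D S (rot (4 * int (half - Suc l)))"
      by (metis cs_S_rfl_eq cs_S_rot_eq dvd_triv_left)+
    then show "cs D S (rfl (int m - 4 * int l)) + cs D S (rot (int m - (4 * int l + 2))) = ?F (half - Suc l)"
      by (simp only: add.commute)
  qed
  also have "\<dots> = e1S"
    unfolding e1S_def by (rule sum.nat_diff_reindex)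
  finally show ?thesis .
qed

lemma e1_fixed: "\<forall>k\<in>K1. ract k e1 = e1"
proof -
  have "ract (rot 0) e1 = e1"
    using D.pact_one[OF subgroup_U] D.pact_one[OF subgroup_S] e1_R
    by (auto simp: R_def e1_def one_rot[symmetric])
  moreover have "pact D U (rfl (int m)) e1U = e1U"
    by (simp add: e1U_def pact.neg pact.add pact.diff D.pact_cs[OF subgroup_U] add.commute)
  ultimately show ?thesis
    by (simp add: K1_def e1_def pact_rfl_m_e1S)
qed

lemma e2_fixed: "\<forall>k\<in>K2. ract k e2 = e2"
proof
  fix k assume "k \<in> K2"
  then obtain i where k: "k = rot i" by (auto simp: K2_def)
  have "pact D U (rot i) e2U = e2U"
  proof
    fix C
    show "pact D U (rot i) e2U C = e2U C"
    proof (cases "C \<in> lcos D U")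
      case True
      then obtain h where "h \<in> carrier D" "C = {h}" by (auto simp: lcos_U)
      then show ?thesis
        by (simp add: pact_def l_coset_def e2U_singleton snd_mult lcos_U)
    qed (simp add: pact_def e2U_def)
  qed
  moreover have "pact D S (rot i) e2S = e2S"
  proof
    fix C
    show "pact D S (rot i) e2S C = e2S C"
    proof (cases "C \<in> lcos D S")
      case True
      then obtain g where "g \<in> carrier D" "C = g <#\<^bsub>D\<^esub> S" by (rule D.lcosE)
      then show ?thesis
        by (simp add: pact_def D.lcos_lmult[OF subgroup_S] e2S_lcos D.lcosI snd_mult)
    qed (simp add: pact_def e2S_def)
  qed
  ultimately show "ract k e2 = e2" using k by (simp add: e2_def)
qed

definition Pm where "Pm = pm D K1 \<times> pm D K2"
definition Pact where "Pact = (\<lambda>g (p1, p2). (pact D K1 g p1, pact D K2 g p2))"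
definition phi where "phi p = coset_lift zsc3 D K1 ract e1 (fst p) + coset_lift zsc3 D K2 ract e2 (snd p)"

lemma module_hom_phi: "module_hom zsc2 zsc3 phi"
proof -
  interpret lift1: module_hom zsc zsc3 "coset_lift zsc3 D K1 ract e1"
    by (rule ract.module_hom_coset_lift)
  interpret lift2: module_hom zsc zsc3 "coset_lift zsc3 D K2 ract e2"
    by (rule ract.module_hom_coset_lift)
  show ?thesis
    by unfold_locales
      (auto simp: phi_def lift1.add lift2.add lift1.scale lift2.scale zsc2_def zsc3.scale_right_distrib)
qed

sublocale phi: module_hom zsc2 zsc3 phi
  by (rule module_hom_phi)

lemma phi_Pact: assumes "p \<in> Pm" "g \<in> carrier D" shows "phi (Pact g p) = ract g (phi p)"
proof -
  have p: "fst p \<in> pm D K1" "snd p \<in> pm D K2" using assms(1) by (auto simp: Pm_def mem_Times_iff)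
  have "phi (Pact g p) = ract g (coset_lift zsc3 D K1 ract e1 (fst p)) + ract g (coset_lift zsc3 D K2 ract e2 (snd p))"
    using p by (simp add: phi_def Pact_def split_beta
        ract.coset_lift_pact[OF subgroup_K1 finite_D e1_fixed assms(2)]
        ract.coset_lift_pact[OF subgroup_K2 finite_D e2_fixed assms(2)])
  also have "\<dots> = ract g (phi p)"
    by (simp add: phi_def ract.act_add assms(2))
  finally show ?thesis .
qed

lemma coset_lift_R: "e \<in> R \<Longrightarrow> coset_lift zsc3 D K ract e x \<in> R"
  by (simp add: coset_lift_def R_sum R_scale R_ract)

lemma phi_R: "phi p \<in> R"
  by (simp add: phi_def R_add coset_lift_R e1_R e2_R)

lemma Psi_coset_lift: assumes "e \<in> R" "Psi e = 0" "subgroup K D"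
  shows "Psi (coset_lift zsc3 D K ract e x) = 0"
proof -
  have "Psi (coset_lift zsc3 D K ract e x) = (\<Sum>C\<in>lcos D K. zsc2 (x C) (Psi (ract (crep C) e)))"
    by (simp add: coset_lift_def Psi.sum Psi.scale)
  also have "\<dots> = (\<Sum>C\<in>lcos D K. zsc2 (x C) 0)"
    using assms by (intro sum.cong) (simp_all add: Psi_ract D.crep_carrier module_hom.zero[OF iact.act_hom])
  finally show ?thesis by simp
qed

lemma phi_E: "phi p \<in> E"
  using phi_R Psi_coset_lift[OF e1_R Psi_e1 subgroup_K1] Psi_coset_lift[OF e2_R Psi_e2 subgroup_K2]
  by (simp add: E_def phi_def Psi.add)

definition Rot where "Rot = rot 0 <#\<^bsub>D\<^esub> K2"
definition Ref where "Ref = rfl 0 <#\<^bsub>D\<^esub> K2"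

lemma lcoset_K2_Rot_Ref: "h \<in> carrier D \<Longrightarrow> h <#\<^bsub>D\<^esub> K2 = (if snd h then Ref else Rot)"
  by (auto simp: Rot_def Ref_def lcoset_K2)

lemma Rot_neq_Ref: "Rot \<noteq> Ref"
proof -
  have "rot 0 \<in> Rot" "rot 0 \<notin> Ref" by (auto simp: Rot_def Ref_def lcoset_K2)
  then show ?thesis by auto
qed

lemma lcos_K2: "lcos D K2 = {Rot, Ref}"
proof -
  have "lcos D K2 = (\<lambda>g. g <#\<^bsub>D\<^esub> K2) ` carrier D" by (auto simp: lcos_def)
  also have "\<dots> = {Rot, Ref}"
  proof
    show "(\<lambda>g. g <#\<^bsub>D\<^esub> K2) ` carrier D \<subseteq> {Rot, Ref}" by (auto simp: lcoset_K2_Rot_Ref)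
    show "{Rot, Ref} \<subseteq> (\<lambda>g. g <#\<^bsub>D\<^esub> K2) ` carrier D"
      using lcoset_K2_Rot_Ref[of "rot 0"] lcoset_K2_Rot_Ref[of "rfl 0"] by force
  qed
  finally show ?thesis .
qed

lemma snd_crep_K2: "snd (crep Rot) = False" "snd (crep Ref) = True"
proof -
  have "crep Rot \<in> Rot" "crep Ref \<in> Ref"
    using D.crep_mem[OF subgroup_K2] lcos_K2 by auto
  then show "snd (crep Rot) = False" "snd (crep Ref) = True"
    by (auto simp: Rot_def Ref_def lcoset_K2)
qed

definition rot_rep where "rot_rep C = (if snd (crep C) then crep C \<otimes>\<^bsub>D\<^esub> rfl (int m) else crep C)"

lemma rot_rep: assumes "C \<in> lcos D K1"
  shows "rot_rep C \<in> C" "\<not> snd (rot_rep C)" "rot_rep C \<in> carrier D"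
proof -
  have c: "crep C \<in> carrier D" "crep C <#\<^bsub>D\<^esub> K1 = C"
    using D.crep_carrier[OF subgroup_K1 assms] D.crep_lcos[OF subgroup_K1 assms] by auto
  then have "rot_rep C \<in> crep C <#\<^bsub>D\<^esub> K1" by (auto simp: rot_rep_def lcoset_K1)
  then show "rot_rep C \<in> C" using c by simp
  show "\<not> snd (rot_rep C)" using snd_mult[OF c(1) rfl_carrier] by (simp add: rot_rep_def)
  show "rot_rep C \<in> carrier D" using c by (simp add: rot_rep_def)
qed

lemma rot_rep_rot: assumes "h \<in> carrier D" "\<not> snd h" shows "rot_rep (h <#\<^bsub>D\<^esub> K1) = h"
proof -
  have C: "h <#\<^bsub>D\<^esub> K1 \<in> lcos D K1" using assms(1) by (rule D.lcosI)
  have "rot_rep (h <#\<^bsub>D\<^esub> K1) \<in> {h, h \<otimes>\<^bsub>D\<^esub> rfl (int m)}" using rot_rep(1)[OF C] lcoset_K1[OF assms(1)] by simp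
  moreover have "snd (h \<otimes>\<^bsub>D\<^esub> rfl (int m))" using snd_mult[OF assms(1) rfl_carrier] assms(2) by simp
  ultimately show ?thesis using rot_rep(2)[OF C] by auto
qed

lemma rfl_m_K1: "rfl (int m) <#\<^bsub>D\<^esub> K1 = rot 0 <#\<^bsub>D\<^esub> K1"
  by (auto simp: lcoset_K1)

lemma e1U_translate:
  assumes "g \<in> carrier D" "h \<in> carrier D"
  shows "e1U {inv\<^bsub>D\<^esub> g \<otimes>\<^bsub>D\<^esub> h} = - of_bool (h \<in> g <#\<^bsub>D\<^esub> K1)"
proof -
  have "g \<otimes>\<^bsub>D\<^esub> rfl (int m) \<noteq> g"
    using assms(1) snd_mult[OF assms(1) rfl_carrier] by (metis snd_rfl)
  then show ?thesis
    using assms by (auto simp: e1U_singleton D.inv_solve_left' one_rot[symmetric] lcoset_K1)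
qed

lemma fst_coset_lift_K1_singleton:
  assumes h: "h \<in> carrier D"
  shows "fst (coset_lift zsc3 D K1 ract e1 x) {h} = - x (h <#\<^bsub>D\<^esub> K1)"
proof -
  have "fst (coset_lift zsc3 D K1 ract e1 x) {h}
      = (\<Sum>C\<in>lcos D K1. x C * e1U {inv\<^bsub>D\<^esub> (crep C) \<otimes>\<^bsub>D\<^esub> h})"
    by (auto simp: coset_lift_def fst_sum sum_fun_apply zsc3_def e1_def pact_def lcos_U h l_coset_def
        D.crep_carrier[OF subgroup_K1] intro!: sum.cong)
  also have "\<dots> = (\<Sum>C\<in>lcos D K1. if C = h <#\<^bsub>D\<^esub> K1 then - x C else 0)"
    using h D.lcos_eq_iff_mem[OF subgroup_K1 _ h]
    by (intro sum.cong refl) (auto simp: e1U_translate D.crep_carrier[OF subgroup_K1] D.crep_lcos[OF subgroup_K1])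
  also have "\<dots> = - x (h <#\<^bsub>D\<^esub> K1)"
    using D.lcosI[OF h, of K1] D.finite_lcos[OF finite_D] by (simp add: sum.delta')
  finally show ?thesis .
qed

lemma fst_coset_lift_K2_singleton:
  assumes h: "h \<in> carrier D"
  shows "fst (coset_lift zsc3 D K2 ract e2 x) {h} = - x (if snd h then Rot else Ref)"
proof -
  have "fst (coset_lift zsc3 D K2 ract e2 x) {h}
      = (\<Sum>C\<in>lcos D K2. x C * e2U {inv\<^bsub>D\<^esub> (crep C) \<otimes>\<^bsub>D\<^esub> h})"
    by (auto simp: coset_lift_def fst_sum sum_fun_apply zsc3_def e2_def pact_def lcos_U h l_coset_def
        D.crep_carrier[OF subgroup_K2] intro!: sum.cong)
  also have "\<dots> = (\<Sum>C\<in>{Rot, Ref}. - x C * of_bool (snd (crep C) \<noteq> snd h))"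
    unfolding lcos_K2[symmetric] using h D.crep_carrier[OF subgroup_K2]
    by (intro sum.cong refl) (simp add: e2U_singleton snd_mult snd_inv)
  also have "\<dots> = - x (if snd h then Rot else Ref)"
    using Rot_neq_Ref by (simp add: snd_crep_K2)
  finally show ?thesis .
qed

lemma fst_phi_singleton: "h \<in> carrier D \<Longrightarrow> fst (phi p) {h} = - fst p (h <#\<^bsub>D\<^esub> K1) - snd p (if snd h then Rot else Ref)"
  by (simp add: phi_def fst_coset_lift_K1_singleton fst_coset_lift_K2_singleton)

lemma aug_e1S: "aug D S e1S = 2 * int half"
  by (simp add: e1S_def aug.sum aug.add D.aug_cs[OF finite_D])

lemma aug_e2S: "aug D S e2S = int m * int m"
proof -
  have "(\<Sum>g\<in>carrier D. e2S (g <#\<^bsub>D\<^esub> S)) = of_nat (card S) * aug D S e2S"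
    unfolding aug_def by (rule D.sum_carrier_lcos[OF subgroup_S finite_D])
  moreover have "(\<Sum>g\<in>carrier D. e2S (g <#\<^bsub>D\<^esub> S)) = (\<Sum>a\<in>{0..<n}. 2 * int half - 1)"
    by (simp add: sum_carrier_D e2S_lcos)
  moreover have "(\<Sum>a\<in>{0..<n}. 2 * int half - 1) = 2 * int m * (2 * int half - 1)"
    using n_gt_1 by (simp add: n_def)
  ultimately show ?thesis using card_S two_half by (simp add: n_def)
qed

definition coord_diff where "coord_diff x = fst x {rot 0} - fst x {rfl (int m)}"
definition coord_sum where "coord_sum x = aug D S (fst (snd x)) + (int m + 1) * snd (snd x)"
definition coord_Ref where "coord_Ref x = (coord_sum x - coord_diff x) div 2"
definition coord_Rot where "coord_Rot x = coord_Ref x + coord_diff x"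
definition phi_inv where "phi_inv x = ((\<lambda>C. if C \<in> lcos D K1 then - fst x {rot_rep C} - coord_Ref x else 0),
   (\<lambda>C. if C = Rot then coord_Rot x else if C = Ref then coord_Ref x else 0))"

lemma coord_sum_phi: "coord_sum (phi p) = snd p Rot + snd p Ref"
proof -
  have a1: "aug D S (fst (snd (coset_lift zsc3 D K1 ract e1 p1))) = 2 * int half * (\<Sum>C\<in>lcos D K1. p1 C)" for p1
    by (simp add: coset_lift_def fst_sum snd_sum zsc3_def e1_def aug.sum aug_zsc
        D.aug_pact[OF subgroup_S finite_D] D.crep_carrier[OF subgroup_K1] aug_e1S sum_distrib_left algebra_simps)
  have a2: "aug D S (fst (snd (coset_lift zsc3 D K2 ract e2 p2))) = int m * int m * (p2 Rot + p2 Ref)" for p2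
    using Rot_neq_Ref
    by (simp add: coset_lift_def fst_sum snd_sum zsc3_def e2_def aug.sum aug.add aug_zsc lcos_K2
        D.aug_pact[OF subgroup_S finite_D] D.crep_carrier[OF subgroup_K2] aug_e2S algebra_simps)
  have b1: "snd (snd (coset_lift zsc3 D K1 ract e1 p1)) = - (\<Sum>C\<in>lcos D K1. p1 C)" for p1
    by (simp add: coset_lift_def snd_sum zsc3_def e1_def sum_negf)
  have b2: "snd (snd (coset_lift zsc3 D K2 ract e2 p2)) = (1 - int m) * (p2 Rot + p2 Ref)" for p2
    using Rot_neq_Ref by (simp add: coset_lift_def snd_sum zsc3_def e2_def lcos_K2 algebra_simps)
  show ?thesis
    using two_half by (simp add: coord_sum_def phi_def aug.add a1 a2 b1 b2 algebra_simps)
qed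

lemma coord_diff_phi: "coord_diff (phi p) = snd p Rot - snd p Ref"
proof -
  have "rfl (int m) <#\<^bsub>D\<^esub> K1 = rot 0 <#\<^bsub>D\<^esub> K1" by (rule rfl_m_K1)
  then show ?thesis by (simp add: coord_diff_def fst_phi_singleton)
qed

lemma coord_Ref_phi: "coord_Ref (phi p) = snd p Ref"
proof -
  have "coord_sum (phi p) - coord_diff (phi p) = 2 * snd p Ref" by (simp add: coord_sum_phi coord_diff_phi)
  then show ?thesis by (simp add: coord_Ref_def)
qed

lemma coord_Rot_phi: "coord_Rot (phi p) = snd p Rot"
  by (simp add: coord_Rot_def coord_Ref_phi coord_diff_phi)

lemma phi_inv_Pm: "phi_inv x \<in> Pm"
  using lcos_K2 by (auto simp: phi_inv_def Pm_def pm_def)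

lemma phi_inv_phi: assumes "p \<in> Pm" shows "phi_inv (phi p) = p"
proof -
  obtain p1 p2 where p: "p = (p1, p2)" "p1 \<in> pm D K1" "p2 \<in> pm D K2" using assms by (auto simp: Pm_def)
  have a: "fst (phi_inv (phi (p1, p2))) = p1"
  proof
    fix C show "fst (phi_inv (phi (p1, p2))) C = p1 C"
    proof (cases "C \<in> lcos D K1")
      case True
      have "rot_rep C <#\<^bsub>D\<^esub> K1 = C" using D.lcos_eq_mem[OF subgroup_K1 True rot_rep(1)[OF True]] .
      then show ?thesis using True rot_rep(2,3)[OF True] by (simp add: phi_inv_def fst_phi_singleton coord_Ref_phi)
    next
      case False then show ?thesis using p(2) by (simp add: phi_inv_def pm_def)
    qed
  qed
  have b: "snd (phi_inv (phi (p1, p2))) = p2"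
  proof
    fix C show "snd (phi_inv (phi (p1, p2))) C = p2 C"
      using p(3) Rot_neq_Ref lcos_K2 by (auto simp: phi_inv_def coord_Rot_phi coord_Ref_phi pm_def)
  qed
  show ?thesis using a b unfolding p(1) by (simp add: prod_eq_iff)
qed

context
  fixes x1 x2 x3
  assumes in_E: "(x1, x2, x3) \<in> E" and x1_rot: "\<And>a. x1 {rot a} = 0"
begin

lemma kernel_pm: "x1 \<in> pm D U" "x2 \<in> pm D S"
  using in_E by (auto simp: E_def R_def)

lemma kernel_S_eq:
  "g \<in> carrier D \<Longrightarrow>
    x1 {g} + x1 {g \<otimes>\<^bsub>D\<^esub> rot (int m)} + x2 (g <#\<^bsub>D\<^esub> S) + x2 ((g \<otimes>\<^bsub>D\<^esub> rot (-2)) <#\<^bsub>D\<^esub> S) + x3 = 0"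
  using in_E Psi_S[of g x1 x2 x3] by (simp add: E_def)

lemma kernel_T_eq:
  "g \<in> carrier D \<Longrightarrow>
    x1 {g} + x1 {g \<otimes>\<^bsub>D\<^esub> rfl 0} + x2 (g <#\<^bsub>D\<^esub> S) + x2 ((g \<otimes>\<^bsub>D\<^esub> rfl 0) <#\<^bsub>D\<^esub> S) + x3 = 0"
  using in_E Psi_T[of g x1 x2 x3] by (simp add: E_def)

text \<open>Along the rotations 2 x2 + x3 changes sign under a shift by 2; as m is odd,
  going once around the 2m rotations forces it to vanish.\<close>

lemma kernel_rot: "2 * x2 (rot a <#\<^bsub>D\<^esub> S) + x3 = 0"
proof -
  define h where "h a = 2 * x2 (rot a <#\<^bsub>D\<^esub> S) + x3" for a
  have "h a = - h (a - 2)" for a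
    using kernel_S_eq[of "rot a"] x1_rot rot_sub_m[of "a - 2"] by (simp add: h_def algebra_simps)
  then have "h a = (-1) ^ m * h (a - int m * 2)"
    by (rule neg_shift_iterate)
  moreover have "rot (a - int m * 2) = rot a"
    by (simp add: rot_eq_iff) (simp add: n_def mult.commute)
  ultimately have "h a = - h a"
    using odd_m by (simp add: h_def)
  then show ?thesis by (simp add: h_def)
qed

lemma kernel_x1_rfl: "x1 {rfl b} = - x2 (rot b <#\<^bsub>D\<^esub> S) - x2 (rfl b <#\<^bsub>D\<^esub> S) - x3"
  using kernel_T_eq[of "rot b"] x1_rot by (simp add: algebra_simps)

lemma kernel_rfl_add_2: "x2 (rfl (a + 2) <#\<^bsub>D\<^esub> S) = x2 (rfl a <#\<^bsub>D\<^esub> S)"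
proof -
  have "rot (a - int m) <#\<^bsub>D\<^esub> S = rot a <#\<^bsub>D\<^esub> S" "rfl (a - int m) <#\<^bsub>D\<^esub> S = rfl a <#\<^bsub>D\<^esub> S"
    by (simp_all add: lcos_S_rot_eq_iff lcos_S_rfl_eq_iff)
  then have "x1 {rfl a} + x1 {rfl (a - int m)} = - 2 * x2 (rfl a <#\<^bsub>D\<^esub> S) - x3"
    using kernel_x1_rfl[of a] kernel_x1_rfl[of "a - int m"] kernel_rot[of a] by simp
  then show ?thesis
    using kernel_S_eq[of "rfl a"] by (simp add: algebra_simps)
qed

lemma kernel_rfl_const: "0 \<le> a \<Longrightarrow> x2 (rfl a <#\<^bsub>D\<^esub> S) = x2 (rfl 0 <#\<^bsub>D\<^esub> S)"
proof -
  have add_2l: "x2 (rfl (a + 2 * int l) <#\<^bsub>D\<^esub> S) = x2 (rfl a <#\<^bsub>D\<^esub> S)" for a l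
    by (induction l) (simp_all add: kernel_rfl_add_2[of "a + 2 * int _", simplified algebra_simps] algebra_simps)
  have "x2 (rfl (1 + a) <#\<^bsub>D\<^esub> S) = x2 (rfl a <#\<^bsub>D\<^esub> S)" for a
  proof -
    have "rfl (1 + a) <#\<^bsub>D\<^esub> S = rfl (a + 2 * int half) <#\<^bsub>D\<^esub> S"
      using two_half by (simp add: lcos_S_rfl_eq_iff)
    then show ?thesis by (simp add: add_2l)
  qed
  then have "x2 (rfl (int l) <#\<^bsub>D\<^esub> S) = x2 (rfl 0 <#\<^bsub>D\<^esub> S)" for l
    by (induction l) simp_all
  then show "0 \<le> a \<Longrightarrow> ?thesis" by (metis nonneg_int_cases)
qed

lemma kernel_rfl:
  assumes "x1 {rfl (int m)} = 0" and "0 \<le> a"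
  shows "2 * x2 (rfl a <#\<^bsub>D\<^esub> S) + x3 = 0"
  using kernel_x1_rfl[of "int m"] kernel_rot[of "int m"] kernel_rfl_const[of "int m"]
    kernel_rfl_const[of a] assms
  by simp

lemma kernel_aug:
  assumes "x1 {rfl (int m)} = 0"
  shows "aug D S x2 = - int m * x3"
proof -
  have "2 * aug D S x2 = (\<Sum>g\<in>carrier D. x2 (g <#\<^bsub>D\<^esub> S))"
    using D.sum_carrier_lcos[OF subgroup_S finite_D, of x2] card_S by (simp add: aug_def)
  also have "\<dots> = (\<Sum>a\<in>{0..<n}. x2 (rot a <#\<^bsub>D\<^esub> S) + x2 (rfl a <#\<^bsub>D\<^esub> S))"
    by (rule sum_carrier_D)
  also have "\<dots> = (\<Sum>a\<in>{0..<n}. - x3)"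
    using kernel_rot kernel_rfl[OF assms] by (intro sum.cong refl) (smt (verit) atLeastLessThan_iff)
  also have "\<dots> = - 2 * int m * x3"
    using n_gt_1 by (simp add: n_def)
  finally show ?thesis by simp
qed

lemma kernel_eq_0:
  assumes x1_rfl_m: "x1 {rfl (int m)} = 0" and coord_sum: "coord_sum (x1, x2, x3) \<in> {0, 1}"
  shows "(x1, x2, x3) = 0"
proof -
  have "coord_sum (x1, x2, x3) = x3"
    by (simp add: coord_sum_def kernel_aug[OF x1_rfl_m] algebra_simps)
  moreover have "even x3"
    using kernel_rfl[OF x1_rfl_m, of 0] by presburger
  ultimately have "x3 = 0"
    using coord_sum by auto
  then have "x2 (g <#\<^bsub>D\<^esub> S) = 0" "x1 {g} = 0" if "g \<in> carrier D" for g
    using that kernel_rot kernel_rfl[OF x1_rfl_m] kernel_x1_rfl x1_rot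
    by (auto elim!: carrier_cases)
  then have "x1 = 0" "x2 = 0"
    using D.pm_eq_0I[OF kernel_pm(1)] D.pm_eq_0I[OF kernel_pm(2)] lcoset_U by auto
  with \<open>x3 = 0\<close> show ?thesis by (simp add: zero_prod_def)
qed

end

lemma coord_sum_diff: "coord_sum (x - y) = coord_sum x - coord_sum y"
  by (simp add: coord_sum_def aug.diff algebra_simps)

lemma E_diff: "x \<in> E \<Longrightarrow> y \<in> E \<Longrightarrow> x - y \<in> E"
  by (auto simp: E_def R_diff Psi.diff)

lemma fst_sub_phi_phi_inv_rot: "fst (x - phi (phi_inv x)) {rot a} = 0"
  using D.lcosI[of "rot a" K1] Rot_neq_Ref
  by (simp add: fst_phi_singleton phi_inv_def rot_rep_rot)

lemma fst_sub_phi_phi_inv_rfl_m: "fst (x - phi (phi_inv x)) {rfl (int m)} = 0"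
  using D.lcosI[of "rot 0" K1]
  by (simp add: fst_phi_singleton phi_inv_def rfl_m_K1 rot_rep_rot coord_Rot_def coord_diff_def)

lemma coord_sum_sub_phi_phi_inv: "coord_sum (x - phi (phi_inv x)) \<in> {0, 1}"
proof -
  have "coord_sum (x - phi (phi_inv x)) = coord_sum x - (coord_Rot x + coord_Ref x)"
    using Rot_neq_Ref by (simp add: coord_sum_diff coord_sum_phi phi_inv_def)
  also have "\<dots> = (coord_sum x - coord_diff x) mod 2"
    by (simp add: coord_Rot_def coord_Ref_def minus_div_mult_eq_mod[symmetric] algebra_simps)
  moreover have "(coord_sum x - coord_diff x) mod 2 \<in> {0, 1}"
    by auto
  ultimately show ?thesis by simp
qed

lemma phi_phi_inv:
  assumes "x \<in> E"
  shows "phi (phi_inv x) = x"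
proof -
  obtain y1 y2 y3 where y: "x - phi (phi_inv x) = (y1, y2, y3)"
    by (cases "x - phi (phi_inv x)") auto
  have "(y1, y2, y3) \<in> E"
    unfolding y[symmetric] using assms phi_E by (rule E_diff)
  then have "(y1, y2, y3) = 0"
    using fst_sub_phi_phi_inv_rot[of x] fst_sub_phi_phi_inv_rfl_m[of x] coord_sum_sub_phi_phi_inv[of x]
    by (intro kernel_eq_0) (simp_all add: y)
  then show ?thesis using y by simp
qed

lemma Pm_add: "p \<in> Pm \<Longrightarrow> q \<in> Pm \<Longrightarrow> p + q \<in> Pm"
  by (auto simp: Pm_def pm_add)

lemma Pm_Pact: "Pact g p \<in> Pm"
  by (simp add: Pm_def Pact_def pact_in_pm split_beta)

theorem H1_zero_E:
  assumes H: "subgroup H D"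
  shows "H1_zero D H ract E"
proof (rule H1_zero_transfer[where \<psi> = phi_inv])
  show "H1_zero D H Pact Pm"
    unfolding Pm_def Pact_def
    by (intro H1_zero_Times D.H1_zero_pm subgroup_K1 subgroup_K2 finite_D H)
  show "additive phi"
    by (rule additive.intro) (rule phi.add)
  show "phi (Pact g p) = ract g (phi p)" if "g \<in> H" "p \<in> Pm" for g p
    using that subgroup.subset[OF H] by (auto intro: phi_Pact)
qed (simp_all add: Pm_add Pm_Pact phi_E phi_inv_phi phi_inv_Pm phi_phi_inv)

end

theorem proposition7p7:
  fixes m :: nat
  assumes "odd m" and "0 < m"
  defines "D \<equiv> dihedral (int (2 * m))"
  defines "S \<equiv> {\<one>\<^bsub>D\<^esub>, dsigma [^]\<^bsub>D\<^esub> m}"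
  defines "T \<equiv> {\<one>\<^bsub>D\<^esub>, dtau}"
  defines "U \<equiv> {\<one>\<^bsub>D\<^esub>}"
  defines "I \<equiv> {(y1, y2). y1 \<in> pm D S \<and> y2 \<in> pm D T \<and> aug D S y1 + aug D T y2 = 0}"
  defines "R \<equiv> pm D U \<times> pm D S \<times> (UNIV :: int set)"
  defines "iact \<equiv> \<lambda>g (y1, y2). (pact D S g y1, pact D T g y2)"
  defines "ract \<equiv> \<lambda>g (x1, x2, x3::int). (pact D U g x1, pact D S g x2, x3)"
  defines "v1 \<equiv> (cs D S \<one>\<^bsub>D\<^esub>, - cs D T \<one>\<^bsub>D\<^esub>)"
  defines "v2 \<equiv> (cs D S \<one>\<^bsub>D\<^esub> + cs D S (dsigma [^]\<^bsub>D\<^esub> (2::nat)),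
                - (cs D T \<one>\<^bsub>D\<^esub> + cs D T (dsigma [^]\<^bsub>D\<^esub> m)))"
  defines "v3 \<equiv> ((\<Sum>i<m. cs D S (dsigma [^]\<^bsub>D\<^esub> i) + cs D S (dsigma [^]\<^bsub>D\<^esub> i \<otimes>\<^bsub>D\<^esub> dtau)),
                - (\<Sum>i<2 * m. cs D T (dsigma [^]\<^bsub>D\<^esub> i)))"
  defines "\<Psi> \<equiv> \<lambda>(x1, x2, x3). plift D U iact v1 x1 + plift D S iact v2 x2 + zsc2 x3 v3"
  defines "E \<equiv> {x \<in> R. \<Psi> x = 0}"
  shows "\<Psi> ` R = I \<and> (\<forall>H. subgroup H D \<longrightarrow> H1_zero D H ract E)"
proof -
  have loc: "odd_dihedral m"
    using assms(1,2) by unfold_locales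
  note loc_defs = odd_dihedral.n_def[OF loc] odd_dihedral.S_def[OF loc] odd_dihedral.T_def[OF loc]
    odd_dihedral.U_def[OF loc] odd_dihedral.I_def[OF loc] odd_dihedral.R_def[OF loc]
    odd_dihedral.iact_def[OF loc] odd_dihedral.ract_def[OF loc] odd_dihedral.v1_def[OF loc]
    odd_dihedral.v2_def[OF loc] odd_dihedral.v3_def[OF loc] odd_dihedral.Psi_def[OF loc]
    odd_dihedral.E_def[OF loc]
  have "D = dihedral (odd_dihedral.n m)" "S = odd_dihedral.S m" "T = odd_dihedral.T m" "U = odd_dihedral.U m"
    by (simp_all add: D_def S_def T_def U_def loc_defs)
  moreover have "I = odd_dihedral.I m" "R = odd_dihedral.R m" "ract = odd_dihedral.ract m"
    "\<Psi> = odd_dihedral.Psi m" "E = odd_dihedral.E m"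
    by (simp_all add: calculation I_def R_def iact_def ract_def v1_def v2_def v3_def \<Psi>_def E_def
        loc_defs)
  ultimately show ?thesis
    using odd_dihedral.Psi_surj[OF loc] odd_dihedral.H1_zero_E[OF loc] by simp
qed

end
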